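(* $\mathbb{C}\oplus\mathbb{C}$ is $W^*$-$C^*$-projective.
   Context: A unital $C^*$-algebra $\mathcal{A}$ is $W^*$-$C^*$-projective if for every von Neumann algebra $\mathcal{B}$, every unital $C^*$-algebra $\mathcal{M}$, every unital surjective $\ast$-homomorphism $\pi:\mathcal{B}\to\mathcal{M}$ and every unital $\ast$-homomorphism $\phi:\mathcal{A}\to\mathcal{M}$, there is a unital $\ast$-homomorphism $\psi:\mathcal{A}\to\mathcal{B}$ with $\pi\circ\psi=\phi$. *)

theory Defs
  imports "HOL-Analysis.Analysis"
begin

class complex_vector_c = real_vector +
  fixes scaleC :: "complex \<Rightarrow> 'a \<Rightarrow> 'a" (infixr \<open>*\<^sub>C\<close> 75)
  assumes scaleC_add_right: "a *\<^sub>C (x + y) = a *\<^sub>C x + a *\<^sub>C y"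
    and scaleC_add_left: "(a + b) *\<^sub>C x = a *\<^sub>C x + b *\<^sub>C x"
    and scaleC_scaleC: "a *\<^sub>C (b *\<^sub>C x) = (a * b) *\<^sub>C x"
    and scaleC_one: "1 *\<^sub>C x = x"
    and scaleR_scaleC: "r *\<^sub>R x = complex_of_real r *\<^sub>C x"

class complex_normed_vector_c = complex_vector_c + real_normed_vector +
  assumes norm_scaleC: "norm (a *\<^sub>C x) = cmod a * norm x"

class chilbert = complex_normed_vector_c + banach +
  fixes cinner :: "'a \<Rightarrow> 'a \<Rightarrow> complex"
  assumes cinner_add_right: "cinner x (y + z) = cinner x y + cinner x z"
    and cinner_scaleC_right: "cinner x (a *\<^sub>C y) = a * cinner x y"
    and cinner_commute: "cinner y x = cnj (cinner x y)"
    and norm_eq_sqrt_cinner: "norm x = sqrt (Re (cinner x x))"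

text \<open>Unital C*-algebras (unit of norm 1, i.e. nonzero).\<close>
class cstar_alg = complex_normed_vector_c + real_normed_algebra_1 + banach +
  fixes cstar :: "'a \<Rightarrow> 'a"
  assumes scaleC_mult_left: "(a *\<^sub>C x) * y = a *\<^sub>C (x * y)"
    and scaleC_mult_right: "x * (a *\<^sub>C y) = a *\<^sub>C (x * y)"
    and cstar_cstar: "cstar (cstar x) = x"
    and cstar_add: "cstar (x + y) = cstar x + cstar y"
    and cstar_scaleC: "cstar (a *\<^sub>C x) = cnj a *\<^sub>C cstar x"
    and cstar_mult: "cstar (x * y) = cstar y * cstar x"
    and cstar_identity: "norm (cstar x * x) = (norm x)\<^sup>2"

definition unital_star_hom :: "('a::cstar_alg \<Rightarrow> 'b::cstar_alg) \<Rightarrow> bool" where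
  "unital_star_hom f \<longleftrightarrow>
     (\<forall>x y. f (x + y) = f x + f y) \<and> (\<forall>a x. f (a *\<^sub>C x) = a *\<^sub>C f x) \<and>
     (\<forall>x y. f (x * y) = f x * f y) \<and> (\<forall>x. f (cstar x) = cstar (f x)) \<and> f 1 = 1"

definition bounded_clinear :: "('a::complex_normed_vector_c \<Rightarrow> 'b::complex_normed_vector_c) \<Rightarrow> bool" where
  "bounded_clinear T \<longleftrightarrow>
     (\<forall>x y. T (x + y) = T x + T y) \<and> (\<forall>a x. T (a *\<^sub>C x) = a *\<^sub>C T x) \<and>
     (\<exists>K. \<forall>x. norm (T x) \<le> norm x * K)"

definition adjoint :: "('h::chilbert \<Rightarrow> 'h) \<Rightarrow> ('h \<Rightarrow> 'h)" where
  "adjoint T = (THE S. \<forall>x y. cinner (T x) y = cinner x (S y))"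

definition commutant :: "('h::chilbert \<Rightarrow> 'h) set \<Rightarrow> ('h \<Rightarrow> 'h) set" where
  "commutant S = {T. bounded_clinear T \<and> (\<forall>A\<in>S. T \<circ> A = A \<circ> T)}"

definition von_neumann_algebra :: "('h::chilbert \<Rightarrow> 'h) set \<Rightarrow> bool" where
  "von_neumann_algebra S \<longleftrightarrow>
     (\<forall>T\<in>S. bounded_clinear T) \<and> id \<in> S \<and>
     (\<forall>A\<in>S. \<forall>B\<in>S. (\<lambda>v. A v + B v) \<in> S) \<and>
     (\<forall>a. \<forall>A\<in>S. (\<lambda>v. a *\<^sub>C A v) \<in> S) \<and>
     (\<forall>A\<in>S. \<forall>B\<in>S. A \<circ> B \<in> S) \<and>
     (\<forall>A\<in>S. adjoint A \<in> S) \<and>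
     commutant (commutant S) = S"

definition unital_star_hom_on_ops :: "('h::chilbert \<Rightarrow> 'h) set \<Rightarrow> (('h \<Rightarrow> 'h) \<Rightarrow> 'm::cstar_alg) \<Rightarrow> bool" where
  "unital_star_hom_on_ops S p \<longleftrightarrow>
     (\<forall>A\<in>S. \<forall>B\<in>S. p (\<lambda>v. A v + B v) = p A + p B) \<and>
     (\<forall>a. \<forall>A\<in>S. p (\<lambda>v. a *\<^sub>C A v) = a *\<^sub>C p A) \<and>
     (\<forall>A\<in>S. \<forall>B\<in>S. p (A \<circ> B) = p A * p B) \<and>
     (\<forall>A\<in>S. p (adjoint A) = cstar (p A)) \<and> p id = 1"

definition unital_star_hom_to_ops :: "('a::cstar_alg \<Rightarrow> ('h::chilbert \<Rightarrow> 'h)) \<Rightarrow> bool" where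
  "unital_star_hom_to_ops f \<longleftrightarrow>
     (\<forall>x y. f (x + y) = (\<lambda>v. f x v + f y v)) \<and> (\<forall>a x. f (a *\<^sub>C x) = (\<lambda>v. a *\<^sub>C f x v)) \<and>
     (\<forall>x y. f (x * y) = f x \<circ> f y) \<and> (\<forall>x. f (cstar x) = adjoint (f x)) \<and> f 1 = id"

datatype cc = CC (cc1: complex) (cc2: complex)

lemma cc_eq_iff: "x = y \<longleftrightarrow> cc1 x = cc1 y \<and> cc2 x = cc2 y"
  by (cases x; cases y) auto

instantiation cc :: "{comm_ring_1}"
begin
definition "0 = CC 0 0"
definition "1 = CC 1 1"
definition "x + y = CC (cc1 x + cc1 y) (cc2 x + cc2 y)"
definition "x - y = CC (cc1 x - cc1 y) (cc2 x - cc2 y)"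
definition "- x = CC (- cc1 x) (- cc2 x)"
definition "x * y = CC (cc1 x * cc1 y) (cc2 x * cc2 y)"
instance
  by standard (auto simp: cc_eq_iff zero_cc_def one_cc_def plus_cc_def minus_cc_def
      uminus_cc_def times_cc_def algebra_simps)
end

lemma cc_simps [simp]:
  "cc1 0 = 0" "cc2 0 = 0" "cc1 1 = 1" "cc2 1 = 1"
  "cc1 (x + y) = cc1 x + cc1 y" "cc2 (x + y) = cc2 x + cc2 y"
  "cc1 (x - y) = cc1 x - cc1 y" "cc2 (x - y) = cc2 x - cc2 y"
  "cc1 (- x) = - cc1 x" "cc2 (- x) = - cc2 x"
  "cc1 (x * y) = cc1 x * cc1 y" "cc2 (x * y) = cc2 x * cc2 y"
  by (simp_all add: zero_cc_def one_cc_def plus_cc_def minus_cc_def uminus_cc_def times_cc_def)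

instantiation cc :: real_vector
begin
definition "r *\<^sub>R x = CC (r *\<^sub>R cc1 x) (r *\<^sub>R cc2 x)"
instance
  by standard (auto simp: cc_eq_iff scaleR_cc_def algebra_simps scaleR_add_right scaleR_add_left)
end

lemma cc_scaleR [simp]: "cc1 (r *\<^sub>R x) = r *\<^sub>R cc1 x" "cc2 (r *\<^sub>R x) = r *\<^sub>R cc2 x"
  by (simp_all add: scaleR_cc_def)

instantiation cc :: real_normed_algebra_1
begin
definition norm_cc_def: "norm x = max (cmod (cc1 x)) (cmod (cc2 x))"
definition sgn_cc_def: "sgn (x::cc) = inverse (norm x) *\<^sub>R x"
definition dist_cc_def: "dist (x::cc) y = norm (x - y)"
definition uniformity_cc_def:
  "(uniformity :: (cc \<times> cc) filter) = (INF e\<in>{0 <..}. principal {(x, y). dist x y < e})"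
definition open_cc_def:
  "open (U :: cc set) \<longleftrightarrow> (\<forall>x\<in>U. eventually (\<lambda>(x', y). x' = x \<longrightarrow> y \<in> U) uniformity)"
instance
proof
  fix x y :: cc and r :: real
  show "norm (x + y) \<le> norm x + norm y"
    unfolding norm_cc_def
    using norm_triangle_ineq[of "cc1 x" "cc1 y"] norm_triangle_ineq[of "cc2 x" "cc2 y"]
    by (auto simp: max_def)
  show "norm (r *\<^sub>R x) = \<bar>r\<bar> * norm x"
    unfolding norm_cc_def by (simp add: max_mult_distrib_left)
  show "norm x = 0 \<longleftrightarrow> x = 0"
    unfolding norm_cc_def by (auto simp: cc_eq_iff max_def)
  show "norm (x * y) \<le> norm x * norm y"
    unfolding norm_cc_def
    by (auto simp: norm_mult max_def intro: mult_mono order_trans[OF _ mult_right_mono])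
       (smt (verit, best) mult_mono norm_ge_zero)+
  show "norm (1::cc) = 1" by (simp add: norm_cc_def)
  show "r *\<^sub>R x * y = r *\<^sub>R (x * y)" by (simp add: cc_eq_iff)
  show "x * r *\<^sub>R y = r *\<^sub>R (x * y)" by (simp add: cc_eq_iff)
qed (simp_all add: sgn_cc_def dist_cc_def uniformity_cc_def open_cc_def)
end

lemma norm_cc1_le: "cmod (cc1 x) \<le> norm x" and norm_cc2_le: "cmod (cc2 x) \<le> norm x"
  by (simp_all add: norm_cc_def)

instance cc :: banach
proof
  fix X :: "nat \<Rightarrow> cc"
  assume X: "Cauchy X"
  have c1: "Cauchy (\<lambda>n. cc1 (X n))"
  proof (rule metric_CauchyI)
    fix e :: real assume "e > 0"
    then obtain M where M: "\<forall>m\<ge>M. \<forall>n\<ge>M. dist (X m) (X n) < e" using X metric_CauchyD by blast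
    show "\<exists>M. \<forall>m\<ge>M. \<forall>n\<ge>M. dist (cc1 (X m)) (cc1 (X n)) < e"
      using M norm_cc1_le[of "X _ - X _"] by (metis cc_simps(7) dist_cc_def dist_norm order.strict_trans1)
  qed
  have c2: "Cauchy (\<lambda>n. cc2 (X n))"
  proof (rule metric_CauchyI)
    fix e :: real assume "e > 0"
    then obtain M where M: "\<forall>m\<ge>M. \<forall>n\<ge>M. dist (X m) (X n) < e" using X metric_CauchyD by blast
    show "\<exists>M. \<forall>m\<ge>M. \<forall>n\<ge>M. dist (cc2 (X m)) (cc2 (X n)) < e"
      using M norm_cc2_le[of "X _ - X _"] by (metis cc_simps(8) dist_cc_def dist_norm order.strict_trans1)
  qed
  obtain a where a: "(\<lambda>n. cc1 (X n)) \<longlonglongrightarrow> a" using c1 Cauchy_convergent_iff convergent_def by blast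
  obtain b where b: "(\<lambda>n. cc2 (X n)) \<longlonglongrightarrow> b" using c2 Cauchy_convergent_iff convergent_def by blast
  have "X \<longlonglongrightarrow> CC a b"
  proof (rule LIMSEQ_I)
    fix r :: real assume "r > 0"
    obtain N1 where N1: "\<forall>n\<ge>N1. norm (cc1 (X n) - a) < r" using a \<open>r > 0\<close> LIMSEQ_D by blast
    obtain N2 where N2: "\<forall>n\<ge>N2. norm (cc2 (X n) - b) < r" using b \<open>r > 0\<close> LIMSEQ_D by blast
    show "\<exists>no. \<forall>n\<ge>no. norm (X n - CC a b) < r"
      using N1 N2 by (intro exI[of _ "max N1 N2"]) (auto simp: norm_cc_def)
  qed
  then show "convergent X" by (auto simp: convergent_def)
qed

instantiation cc :: cstar_alg
begin
definition "a *\<^sub>C x = CC (a * cc1 x) (a * cc2 x)"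
definition "cstar x = CC (cnj (cc1 x)) (cnj (cc2 x))"
instance
proof
  fix x y :: cc and a b :: complex and r :: real
  show "norm (a *\<^sub>C x) = cmod a * norm x"
    by (simp add: norm_cc_def scaleC_cc_def norm_mult max_mult_distrib_left)
  show "norm (cstar x * x) = (norm x)\<^sup>2"
    by (simp add: norm_cc_def cstar_cc_def norm_mult max_def power2_eq_square)
       (smt (verit, ccfv_SIG) mult_mono norm_ge_zero)
  show "r *\<^sub>R x = complex_of_real r *\<^sub>C x"
    using scaleR_conv_of_real[of r "cc1 x"] scaleR_conv_of_real[of r "cc2 x"]
    by (simp add: cc_eq_iff scaleC_cc_def)
qed (auto simp: cc_eq_iff scaleC_cc_def cstar_cc_def algebra_simps)
end

end

theory Submission
  imports Defs
begin

text \<open>A unital *-homomorphism \<open>\<phi>\<close> on \<open>\<complex> \<oplus> \<complex>\<close> is \<open>\<phi>(a, b) = a p + b (1 - p)\<close> for the projection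
  \<open>p = \<phi>(1, 0)\<close>, so it lifts as soon as \<open>p\<close> lifts to a projection \<open>P\<close> of the von Neumann
  algebra: take \<open>\<psi>(a, b) = a P + b (1 - P)\<close>. To lift \<open>p\<close>, choose a self-adjoint lift \<open>c\<close> of
  the symmetry \<open>2p - 1\<close> and let \<open>P\<close> be the projection onto the orthogonal complement of the
  kernel of \<open>\<bar>c\<bar> + c\<close>. It lies in the algebra by the bicommutant theorem, since it commutes with
  every operator commuting with \<open>c\<close>. As \<open>\<pi>(c)\<^sup>2 = 1\<close> forces \<open>\<pi>(\<bar>c\<bar>) = 1\<close>, the relations
  \<open>\<pi>(\<bar>c\<bar> + c) = 2p\<close>, \<open>\<pi>(\<bar>c\<bar> - c) = 2(1 - p)\<close> and \<open>(\<bar>c\<bar> + c)(\<bar>c\<bar> - c) = 0\<close> give \<open>\<pi>(P) = p\<close>.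
  The modulus \<open>\<bar>c\<bar>\<close> is obtained from the binomial series of the square root.\<close>

section \<open>Complex vector spaces and inner products\<close>

lemma scaleC_minus1_left: "(-1) *\<^sub>C (x::'a::complex_vector_c) = - x"
  using scaleR_scaleC[of "-1" x] by simp

lemma scaleC_zero_right [simp]: "a *\<^sub>C (0::'a::complex_vector_c) = 0"
  using scaleC_add_right[of a 0 0] by simp

lemma scaleC_zero_left [simp]: "0 *\<^sub>C (x::'a::complex_vector_c) = 0"
  using scaleR_scaleC[of 0 x] by simp

lemma scaleC_minus_right: "a *\<^sub>C (- x::'a::complex_vector_c) = - (a *\<^sub>C x)"
  by (metis scaleC_minus1_left scaleC_scaleC mult.commute)

lemma scaleC_diff_right: "a *\<^sub>C (x - y::'a::complex_vector_c) = a *\<^sub>C x - a *\<^sub>C y"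
  by (simp only: diff_conv_add_uminus scaleC_add_right scaleC_minus_right)

lemma bounded_linear_scaleC: "bounded_linear (\<lambda>x::'a::complex_normed_vector_c. a *\<^sub>C x)"
proof (rule bounded_linear_intro[where K="cmod a"])
  fix x y :: 'a and r :: real
  show "a *\<^sub>C (x + y) = a *\<^sub>C x + a *\<^sub>C y" by (rule scaleC_add_right)
  show "a *\<^sub>C r *\<^sub>R x = r *\<^sub>R a *\<^sub>C x" by (simp add: scaleR_scaleC scaleC_scaleC mult.commute)
  show "norm (a *\<^sub>C x) \<le> norm x * cmod a" by (simp add: norm_scaleC mult.commute)
qed

lemma cinner_zero_right [simp]: "cinner x (0::'a::chilbert) = 0"
  using cinner_add_right[of x 0 0] by simp

lemma cinner_zero_left [simp]: "cinner (0::'a::chilbert) x = 0"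
  using cinner_commute[of x 0] by simp

lemma cinner_add_left: "cinner (x + y) (z::'a::chilbert) = cinner x z + cinner y z"
  by (metis cinner_add_right cinner_commute complex_cnj_add)

lemma cinner_scaleC_left: "cinner (a *\<^sub>C x) (y::'a::chilbert) = cnj a * cinner x y"
  by (metis cinner_commute cinner_scaleC_right complex_cnj_mult)

lemma cinner_minus_right: "cinner x (- y::'a::chilbert) = - cinner x y"
  using cinner_scaleC_right[of x "-1" y] by (simp add: scaleC_minus1_left)

lemma cinner_minus_left: "cinner (- x::'a::chilbert) y = - cinner x y"
  using cinner_scaleC_left[of "-1" x y] by (simp add: scaleC_minus1_left)

lemma cinner_diff_right: "cinner x (y - z::'a::chilbert) = cinner x y - cinner x z"
  by (simp only: cinner_add_right cinner_minus_right diff_conv_add_uminus)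

lemma cinner_diff_left: "cinner (x - y::'a::chilbert) z = cinner x z - cinner y z"
  by (simp only: cinner_add_left cinner_minus_left diff_conv_add_uminus)

lemma cinner_scaleR_right: "cinner x (r *\<^sub>R y::'a::chilbert) = complex_of_real r * cinner x y"
  by (simp add: scaleR_scaleC cinner_scaleC_right)

lemma cinner_scaleR_left: "cinner (r *\<^sub>R x::'a::chilbert) y = complex_of_real r * cinner x y"
  by (simp add: scaleR_scaleC cinner_scaleC_left)

lemma cinner_self: "cinner x (x::'a::chilbert) = complex_of_real ((norm x)\<^sup>2)"
proof -
  have "Im (cinner x x) = 0"
    using arg_cong[OF cinner_commute[of x x], of Im] by simp
  moreover have "Re (cinner x x) \<ge> 0"
    using norm_eq_sqrt_cinner[of x] norm_ge_zero[of x] by (metis real_sqrt_lt_0_iff not_le)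
  ultimately show ?thesis
    using norm_eq_sqrt_cinner[of x] by (simp add: complex_eq_iff)
qed

lemma cinner_self_Re: "Re (cinner x (x::'a::chilbert)) = (norm x)\<^sup>2"
  by (simp add: cinner_self)

lemma cinner_self_eq_0 [simp]: "cinner x x = 0 \<longleftrightarrow> x = (0::'a::chilbert)"
  by (simp add: cinner_self)

lemma cinner_ext: "(\<And>z. cinner z x = cinner z y) \<Longrightarrow> x = (y::'a::chilbert)"
  by (metis cinner_diff_right cinner_self_eq_0 eq_iff_diff_eq_0)

lemma norm_add_square: "(norm (x + y))\<^sup>2 = (norm x)\<^sup>2 + (norm y)\<^sup>2 + 2 * Re (cinner x (y::'a::chilbert))"
proof -
  have "Re (cinner y x) = Re (cinner x y)"
    by (simp add: cinner_commute[of y x])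
  then show ?thesis
    by (simp flip: cinner_self_Re add: cinner_add_left cinner_add_right)
qed

lemma norm_diff_square: "(norm (x - y))\<^sup>2 = (norm x)\<^sup>2 + (norm y)\<^sup>2 - 2 * Re (cinner x (y::'a::chilbert))"
  using norm_add_square[of x "- y"] by (simp add: cinner_minus_right)

lemma norm_scaleC_square: "(norm (a *\<^sub>C x))\<^sup>2 = (cmod a)\<^sup>2 * (norm (x::'a::chilbert))\<^sup>2"
  by (simp add: norm_scaleC power_mult_distrib)

lemma Cauchy_Schwarz_cinner: "cmod (cinner x y) \<le> norm x * norm (y::'a::chilbert)"
proof (cases "y = 0")
  case True then show ?thesis by simp
next
  case False
  define t where "t = cinner y x / complex_of_real ((norm y)\<^sup>2)"
  have ny: "norm y > 0" using False by simp
  have sym: "cmod (cinner y x) = cmod (cinner x y)"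
    by (simp add: cinner_commute[of y x])
  have "0 \<le> (norm (x - t *\<^sub>C y))\<^sup>2" by simp
  also have "\<dots> = (norm x)\<^sup>2 + (cmod t)\<^sup>2 * (norm y)\<^sup>2 - 2 * Re (t * cinner x y)"
    by (simp add: norm_diff_square norm_scaleC_square cinner_scaleC_right)
  also have "t * cinner x y = (cmod (cinner x y))\<^sup>2 / (norm y)\<^sup>2"
    using complex_norm_square[of "cinner x y"]
    by (simp add: t_def cinner_commute[of y x] mult.commute)
  also have "(cmod t)\<^sup>2 = (cmod (cinner x y))\<^sup>2 / (norm y)\<^sup>2 / (norm y)\<^sup>2"
    by (simp add: t_def norm_divide sym power_divide norm_power flip: power_mult)
  finally have "(cmod (cinner x y))\<^sup>2 \<le> (norm x * norm y)\<^sup>2"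
    using ny by (simp add: field_simps power2_eq_square)
  then show ?thesis by (rule power2_le_imp_le) simp
qed

lemma bounded_linear_cinner_left: "bounded_linear (\<lambda>v. cinner v (y::'a::chilbert))"
proof (rule bounded_linear_intro[where K="norm y"])
  show "cinner (a + b) y = cinner a y + cinner b y" for a b by (rule cinner_add_left)
  show "cinner (r *\<^sub>R a) y = r *\<^sub>R cinner a y" for r a
    by (simp add: cinner_scaleR_left scaleR_conv_of_real)
  show "norm (cinner a y) \<le> norm a * norm y" for a by (rule Cauchy_Schwarz_cinner)
qed

lemma bounded_linear_cinner_right: "bounded_linear (\<lambda>v. cinner (x::'a::chilbert) v)"
proof (rule bounded_linear_intro[where K="norm x"])
  show "cinner x (a + b) = cinner x a + cinner x b" for a b by (rule cinner_add_right)
  show "cinner x (r *\<^sub>R a) = r *\<^sub>R cinner x a" for r a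
    by (simp add: cinner_scaleR_right scaleR_conv_of_real)
  show "norm (cinner x a) \<le> norm a * norm x" for a
    using Cauchy_Schwarz_cinner[of x a] by (simp add: mult.commute)
qed

section \<open>Bounded complex-linear operators\<close>

lemma bounded_clinear_map_add: "bounded_clinear T \<Longrightarrow> T (x + y) = T x + T y"
  by (simp add: bounded_clinear_def)

lemma bounded_clinear_map_scaleC: "bounded_clinear T \<Longrightarrow> T (a *\<^sub>C x) = a *\<^sub>C T x"
  by (simp add: bounded_clinear_def)

lemma bounded_clinear_map_zero: "bounded_clinear T \<Longrightarrow> T 0 = 0"
  using bounded_clinear_map_scaleC[of T 0 0] by simp

lemma bounded_clinear_map_diff: "bounded_clinear T \<Longrightarrow> T (x - y) = T x - T y"
  using bounded_clinear_map_add[of T x "(-1) *\<^sub>C y"] bounded_clinear_map_scaleC[of T "-1" y]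
  by (simp add: scaleC_minus1_left)

lemma bounded_clinear_map_scaleR: "bounded_clinear T \<Longrightarrow> T (r *\<^sub>R x) = r *\<^sub>R T x"
  by (simp add: scaleR_scaleC bounded_clinear_map_scaleC)

lemma bounded_clinear_imp_bounded_linear: "bounded_clinear T \<Longrightarrow> bounded_linear T"
  unfolding bounded_clinear_def
  by (auto intro: bounded_linear_intro simp: scaleR_scaleC)

lemma bounded_clinear_pos_bound:
  assumes "bounded_clinear T"
  obtains K where "K > 0" "\<And>x. norm (T x) \<le> norm x * K"
proof -
  obtain K where K: "\<And>x. norm (T x) \<le> norm x * K"
    using assms by (auto simp: bounded_clinear_def)
  have "norm (T x) \<le> norm x * max K 1" for x
    using K[of x] by (smt (verit) mult_left_mono max.cobounded1 norm_ge_zero)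
  then show ?thesis by (intro that[of "max K 1"]) auto
qed

lemma bounded_clinearI:
  assumes "\<And>x y. T (x + y) = T x + T y" "\<And>a x. T (a *\<^sub>C x) = a *\<^sub>C T x"
    "\<And>x. norm (T x) \<le> norm x * K"
  shows "bounded_clinear T"
  using assms unfolding bounded_clinear_def by blast

lemma bounded_clinear_id: "bounded_clinear id"
  by (rule bounded_clinearI[where K=1]) auto

lemma bounded_clinear_compose:
  assumes A: "bounded_clinear A" and B: "bounded_clinear B"
  shows "bounded_clinear (\<lambda>v. A (B v))"
proof -
  obtain K where K: "K > 0" "\<And>x. norm (A x) \<le> norm x * K" using bounded_clinear_pos_bound[OF A] by blast
  obtain L where L: "L > 0" "\<And>x. norm (B x) \<le> norm x * L" using bounded_clinear_pos_bound[OF B] by blast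
  show ?thesis
  proof (rule bounded_clinearI[where K="L * K"])
    fix x
    have "norm (A (B x)) \<le> norm (B x) * K" by (rule K)
    also have "\<dots> \<le> (norm x * L) * K" using L K by (intro mult_right_mono) auto
    finally show "norm (A (B x)) \<le> norm x * (L * K)" by (simp add: mult.assoc)
  qed (simp_all add: A B bounded_clinear_map_add bounded_clinear_map_scaleC)
qed

lemma bounded_clinear_add:
  assumes A: "bounded_clinear A" and B: "bounded_clinear B"
  shows "bounded_clinear (\<lambda>v. A v + B v)"
proof -
  obtain K where K: "K > 0" "\<And>x. norm (A x) \<le> norm x * K" using bounded_clinear_pos_bound[OF A] by blast
  obtain L where L: "L > 0" "\<And>x. norm (B x) \<le> norm x * L" using bounded_clinear_pos_bound[OF B] by blast
  show ?thesis
  proof (rule bounded_clinearI[where K="K + L"])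
    fix x
    have "norm (A x + B x) \<le> norm (A x) + norm (B x)" by (rule norm_triangle_ineq)
    also have "\<dots> \<le> norm x * K + norm x * L" using K L by (intro add_mono) auto
    finally show "norm (A x + B x) \<le> norm x * (K + L)" by (simp add: distrib_left)
  qed (simp_all add: A B bounded_clinear_map_add bounded_clinear_map_scaleC scaleC_add_right)
qed

lemma bounded_clinear_scaleC:
  assumes A: "bounded_clinear A"
  shows "bounded_clinear (\<lambda>v. a *\<^sub>C A v)"
proof -
  obtain K where K: "K > 0" "\<And>x. norm (A x) \<le> norm x * K" using bounded_clinear_pos_bound[OF A] by blast
  show ?thesis
  proof (rule bounded_clinearI[where K="cmod a * K"])
    fix x
    have "norm (a *\<^sub>C A x) = cmod a * norm (A x)" by (rule norm_scaleC)
    also have "\<dots> \<le> cmod a * (norm x * K)" using K by (intro mult_left_mono) auto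
    finally show "norm (a *\<^sub>C A x) \<le> norm x * (cmod a * K)" by (simp add: algebra_simps)
  qed (simp_all add: A bounded_clinear_map_add bounded_clinear_map_scaleC scaleC_add_right
      scaleC_scaleC mult.commute)
qed

lemma bounded_clinear_diff:
  assumes "bounded_clinear A" "bounded_clinear B"
  shows "bounded_clinear (\<lambda>v. A v - B v)"
  using bounded_clinear_add[OF assms(1) bounded_clinear_scaleC[OF assms(2), of "-1"]]
  by (simp add: scaleC_minus1_left)

section \<open>Orthogonal projections onto closed subspaces\<close>

definition csubspace :: "'a::complex_vector_c set \<Rightarrow> bool" where
  "csubspace V \<longleftrightarrow> 0 \<in> V \<and> (\<forall>x\<in>V. \<forall>y\<in>V. x + y \<in> V) \<and> (\<forall>a. \<forall>x\<in>V. a *\<^sub>C x \<in> V)"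

lemma csubspace_0: "csubspace V \<Longrightarrow> 0 \<in> V"
  by (simp add: csubspace_def)

lemma csubspace_add: "csubspace V \<Longrightarrow> x \<in> V \<Longrightarrow> y \<in> V \<Longrightarrow> x + y \<in> V"
  by (simp add: csubspace_def)

lemma csubspace_scaleC: "csubspace V \<Longrightarrow> x \<in> V \<Longrightarrow> a *\<^sub>C x \<in> V"
  by (simp add: csubspace_def)

lemma csubspace_diff: "csubspace V \<Longrightarrow> x \<in> V \<Longrightarrow> y \<in> V \<Longrightarrow> x - y \<in> V"
  using csubspace_add[of V x "(-1) *\<^sub>C y"] csubspace_scaleC[of V y "-1"]
  by (simp add: scaleC_minus1_left)

lemma parallelogram_law:
  "(norm (a + b))\<^sup>2 + (norm (a - b))\<^sup>2 = 2 * (norm a)\<^sup>2 + 2 * (norm (b::'a::chilbert))\<^sup>2"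
  by (simp add: norm_add_square norm_diff_square)

lemma almost_nearest_points_close:
  fixes x v w :: "'a::chilbert"
  assumes mid: "d \<le> norm (x - (1/2::complex) *\<^sub>C (v + w))" and "0 \<le> d"
    and v: "norm (x - v) \<le> d + e" and w: "norm (x - w) \<le> d + e" and "0 \<le> e" "e \<le> 1"
  shows "(norm (v - w))\<^sup>2 \<le> (8 * d + 4) * e"
proof -
  have "(x - v) + (x - w) = (2::complex) *\<^sub>C (x - (1/2::complex) *\<^sub>C (v + w))"
    by (simp add: scaleC_diff_right scaleC_scaleC scaleC_add_left[of 1 1, simplified] scaleC_one)
  then have "norm ((x - v) + (x - w)) = 2 * norm (x - (1/2::complex) *\<^sub>C (v + w))"
    by (simp add: norm_scaleC)
  then have "4 * d\<^sup>2 \<le> (norm ((x - v) + (x - w)))\<^sup>2"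
    using mid \<open>0 \<le> d\<close> by (simp add: power_mult_distrib power_mono)
  moreover have "(norm (x - v))\<^sup>2 \<le> (d + e)\<^sup>2" "(norm (x - w))\<^sup>2 \<le> (d + e)\<^sup>2"
    using v w by (auto intro!: power_mono)
  ultimately have "(norm ((x - v) - (x - w)))\<^sup>2 \<le> 4 * (d + e)\<^sup>2 - 4 * d\<^sup>2"
    using parallelogram_law[of "x - v" "x - w"] by linarith
  also have "\<dots> \<le> (8 * d + 4) * e"
    using assms(5,6) \<open>0 \<le> d\<close> by (simp add: power2_eq_square algebra_simps mult_left_le)
  finally show ?thesis by (simp add: norm_minus_commute)
qed

lemma minimizing_sequence_Cauchy:
  fixes x :: "'a::chilbert"
  assumes V: "csubspace V" and dle: "\<And>w. w \<in> V \<Longrightarrow> d \<le> norm (x - w)" and d0: "0 \<le> d"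
    and v: "\<And>n. v n \<in> V" "\<And>n. norm (x - v n) < d + 1 / real (Suc n)"
  shows "Cauchy v"
proof (rule metric_CauchyI)
  have close: "(norm (v n - v m))\<^sup>2 \<le> (8 * d + 4) / real (Suc N)" if "n \<ge> N" "m \<ge> N" for n m N
  proof -
    have "1 / real (Suc n) \<le> 1 / real (Suc N)" "1 / real (Suc m) \<le> 1 / real (Suc N)"
      using that by (auto simp: frac_le)
    then have "norm (x - v n) \<le> d + 1 / real (Suc N)" "norm (x - v m) \<le> d + 1 / real (Suc N)"
      using v(2)[of n] v(2)[of m] by linarith+
    moreover have "(1/2::complex) *\<^sub>C (v n + v m) \<in> V"
      by (intro csubspace_scaleC[OF V] csubspace_add[OF V] v)
    ultimately show ?thesis
      using almost_nearest_points_close[OF dle d0, of "v n" "v m" "1 / real (Suc N)"] by simp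
  qed
  fix r :: real assume r: "r > 0"
  obtain N where "(8 * d + 4) / r\<^sup>2 < real (Suc N)"
    using reals_Archimedean2 less_Suc_eq of_nat_less_iff by (metis less_trans of_nat_Suc)
  then have "(8 * d + 4) / real (Suc N) < r\<^sup>2"
    using r d0 by (simp add: field_simps)
  then have "\<forall>n\<ge>N. \<forall>m\<ge>N. (norm (v n - v m))\<^sup>2 < r\<^sup>2"
    using close by (meson order_le_less_trans)
  then have "\<forall>n\<ge>N. \<forall>m\<ge>N. dist (v n) (v m) < r"
    using r by (auto simp: dist_norm intro: power_less_imp_less_base[of _ 2])
  then show "\<exists>M. \<forall>m\<ge>M. \<forall>n\<ge>M. dist (v m) (v n) < r" by blast
qed

lemma closed_csubspace_nearest_point:
  fixes x :: "'a::chilbert"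
  assumes V: "csubspace V" "closed V"
  shows "\<exists>m\<in>V. \<forall>w\<in>V. norm (x - m) \<le> norm (x - w)"
proof -
  define d where "d = infdist x V"
  have Vne: "V \<noteq> {}" using csubspace_0[OF V(1)] by auto
  have d0: "d \<ge> 0" by (simp add: d_def infdist_nonneg)
  have dle: "d \<le> norm (x - w)" if "w \<in> V" for w
    using infdist_le[OF that, of x] by (simp add: d_def dist_norm)
  have "\<exists>v\<in>V. norm (x - v) < d + 1 / real (Suc n)" for n
  proof -
    have "(INF a\<in>V. dist x a) < d + 1 / real (Suc n)"
      using infdist_notempty[OF Vne, of x] d_def by simp
    then show ?thesis
      by (subst (asm) cINF_less_iff) (auto simp: Vne dist_norm intro!: bdd_belowI[of _ 0])
  qed
  then obtain v where v: "\<And>n. v n \<in> V" "\<And>n. norm (x - v n) < d + 1 / real (Suc n)"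
    by metis
  have close: "(norm (v n - v m))\<^sup>2 \<le> (8 * d + 4) / real (Suc N)" if "n \<ge> N" "m \<ge> N" for n m N
  proof -
    have "1 / real (Suc n) \<le> 1 / real (Suc N)" "1 / real (Suc m) \<le> 1 / real (Suc N)"
      using that by (auto simp: frac_le)
    then have "norm (x - v n) \<le> d + 1 / real (Suc N)" "norm (x - v m) \<le> d + 1 / real (Suc N)"
      using v(2)[of n] v(2)[of m] by linarith+
    moreover have "(1/2::complex) *\<^sub>C (v n + v m) \<in> V"
      by (intro csubspace_scaleC[OF V(1)] csubspace_add[OF V(1)] v)
    ultimately show ?thesis
      using almost_nearest_points_close[OF dle d0, of "v n" "v m" "1 / real (Suc N)"] by simp
  qed
  have "Cauchy v"
  proof (rule metric_CauchyI)
    fix r :: real assume r: "r > 0"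
    obtain N where "(8 * d + 4) / r\<^sup>2 < real (Suc N)"
      using reals_Archimedean2 less_Suc_eq of_nat_less_iff by (metis less_trans of_nat_Suc)
    then have "(8 * d + 4) / real (Suc N) < r\<^sup>2"
      using r d0 by (simp add: field_simps)
    then have "\<forall>n\<ge>N. \<forall>m\<ge>N. (norm (v n - v m))\<^sup>2 < r\<^sup>2"
      using close by (meson order_le_less_trans)
    then have "\<forall>n\<ge>N. \<forall>m\<ge>N. dist (v n) (v m) < r"
      using r by (auto simp: dist_norm intro: power_less_imp_less_base[of _ 2])
    then show "\<exists>M. \<forall>m\<ge>M. \<forall>n\<ge>M. dist (v m) (v n) < r" by blast
  qed
  then obtain m where m: "v \<longlonglongrightarrow> m" using Cauchy_convergent_iff convergent_def by blast
  have "(\<lambda>n. d + 1 / real (Suc n)) \<longlonglongrightarrow> d + 0"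
    by (intro tendsto_add tendsto_const LIMSEQ_Suc[OF lim_const_over_n])
  then have "norm (x - m) \<le> d"
    using LIMSEQ_le[OF tendsto_norm[OF tendsto_diff[OF tendsto_const m]]] v(2)
    by (simp add: less_imp_le)
  then show ?thesis using closed_sequentially[OF V(2) v(1) m] dle by (meson order_trans)
qed

text \<open>A nearest point is characterised by orthogonality: moving from it along \<open>w\<close>
  by a small multiple of \<open>cinner w (x - m)\<close> would otherwise decrease the distance.\<close>

lemma nearest_point_orthogonal:
  fixes x :: "'a::chilbert"
  assumes V: "csubspace V" and mV: "m \<in> V" and w: "w \<in> V"
    and nearest: "\<And>w. w \<in> V \<Longrightarrow> norm (x - m) \<le> norm (x - w)"
  shows "cinner w (x - m) = 0"
proof (rule ccontr)
  assume ne: "cinner w (x - m) \<noteq> 0"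
  define z where "z = x - m"
  define c where "c = cinner w z"
  define s where "s = 1 / ((norm w)\<^sup>2 + 1)"
  have w0: "(norm w)\<^sup>2 + 1 > 0" by (simp add: add_nonneg_pos)
  have s0: "s > 0" using w0 by (simp add: s_def)
  define t where "t = complex_of_real s * c"
  have "m + t *\<^sub>C w \<in> V" by (intro csubspace_add[OF V] csubspace_scaleC[OF V] mV w)
  then have "norm z \<le> norm (z - t *\<^sub>C w)" using nearest[of "m + t *\<^sub>C w"] by (simp add: z_def algebra_simps)
  then have "(norm z)\<^sup>2 \<le> (norm (z - t *\<^sub>C w))\<^sup>2" by (simp add: power_mono)
  also have "\<dots> = (norm z)\<^sup>2 + (cmod t)\<^sup>2 * (norm w)\<^sup>2 - 2 * Re (cinner z (t *\<^sub>C w))"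
    by (simp add: norm_diff_square norm_scaleC_square)
  also have "cinner z (t *\<^sub>C w) = t * cnj c"
    by (simp add: cinner_scaleC_right c_def cinner_commute[of z w])
  also have "Re (t * cnj c) = s * (cmod c)\<^sup>2"
    unfolding cmod_power2 by (simp add: t_def power2_eq_square algebra_simps)
  also have "(cmod t)\<^sup>2 = s\<^sup>2 * (cmod c)\<^sup>2" using s0 by (simp add: t_def norm_mult power_mult_distrib)
  finally have "2 * s * (cmod c)\<^sup>2 \<le> s\<^sup>2 * (cmod c)\<^sup>2 * (norm w)\<^sup>2" by simp
  moreover have "(cmod c)\<^sup>2 > 0" using ne by (simp add: c_def z_def)
  ultimately have "2 * s \<le> s\<^sup>2 * (norm w)\<^sup>2" by (simp add: algebra_simps)
  then have "2 \<le> s * (norm w)\<^sup>2" using s0 by (simp add: power2_eq_square algebra_simps)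
  moreover have "s * (norm w)\<^sup>2 < 1" using w0 by (simp add: s_def field_simps)
  ultimately show False by simp
qed

definition proj :: "'a::chilbert set \<Rightarrow> 'a \<Rightarrow> 'a" where
  "proj V x = (SOME m. m \<in> V \<and> (\<forall>v\<in>V. cinner v (x - m) = 0))"

locale closed_csubspace =
  fixes V :: "'a::chilbert set"
  assumes csubspace: "csubspace V" and closed: "closed V"
begin

lemma proj_in_orthogonal: "proj V x \<in> V \<and> (\<forall>v\<in>V. cinner v (x - proj V x) = 0)"
proof -
  obtain m where "m \<in> V" "\<forall>w\<in>V. norm (x - m) \<le> norm (x - w)"
    using closed_csubspace_nearest_point[OF csubspace closed] by blast
  then have "\<exists>m. m \<in> V \<and> (\<forall>v\<in>V. cinner v (x - m) = 0)"
    using nearest_point_orthogonal[OF csubspace] by blast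
  then show ?thesis unfolding proj_def by (rule someI_ex)
qed

lemma proj_in: "proj V x \<in> V"
  using proj_in_orthogonal by blast

lemma proj_orthogonal: "v \<in> V \<Longrightarrow> cinner v (x - proj V x) = 0"
  using proj_in_orthogonal by blast

lemma proj_orthogonal': "v \<in> V \<Longrightarrow> cinner (x - proj V x) v = 0"
  using proj_orthogonal[of v x] cinner_commute[of "x - proj V x" v] by simp

lemma proj_unique:
  assumes "m \<in> V" "\<And>v. v \<in> V \<Longrightarrow> cinner v (x - m) = 0"
  shows "proj V x = m"
proof -
  have d: "proj V x - m \<in> V" using csubspace_diff[OF csubspace proj_in assms(1)] .
  have "cinner (proj V x - m) ((x - m) - (x - proj V x)) = 0"
    using assms(2)[OF d] proj_orthogonal[OF d] by (simp only: cinner_diff_right) simp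
  then show ?thesis by simp
qed

lemma proj_fixes: "x \<in> V \<Longrightarrow> proj V x = x"
  by (rule proj_unique) simp_all

lemma proj_eq_0: "(\<And>v. v \<in> V \<Longrightarrow> cinner v x = 0) \<Longrightarrow> proj V x = 0"
  by (rule proj_unique) (simp_all add: csubspace_0[OF csubspace])

lemma proj_add: "proj V (x + y) = proj V x + proj V y"
proof (rule proj_unique)
  show "proj V x + proj V y \<in> V" by (rule csubspace_add[OF csubspace proj_in proj_in])
  fix v assume v: "v \<in> V"
  have "x + y - (proj V x + proj V y) = (x - proj V x) + (y - proj V y)" by (simp add: algebra_simps)
  then show "cinner v (x + y - (proj V x + proj V y)) = 0"
    by (simp only: cinner_add_right proj_orthogonal[OF v]) simp
qed

lemma proj_scaleC: "proj V (a *\<^sub>C x) = a *\<^sub>C proj V x"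
proof (rule proj_unique)
  show "a *\<^sub>C proj V x \<in> V" by (rule csubspace_scaleC[OF csubspace proj_in])
  fix v assume v: "v \<in> V"
  show "cinner v (a *\<^sub>C x - a *\<^sub>C proj V x) = 0"
    by (simp flip: scaleC_diff_right add: cinner_scaleC_right proj_orthogonal[OF v])
qed

lemma proj_idem: "proj V (proj V x) = proj V x"
  by (rule proj_fixes[OF proj_in])

lemma proj_cinner_sym: "cinner (proj V x) y = cinner x (proj V y)"
proof -
  have "cinner (proj V x) y = cinner (proj V x) (proj V y)"
    using proj_orthogonal[OF proj_in, of x y] by (simp add: cinner_diff_right)
  also have "\<dots> = cinner x (proj V y)"
    using proj_orthogonal'[OF proj_in, of x y] by (simp add: cinner_diff_left)
  finally show ?thesis .
qed

lemma norm_proj_le: "norm (proj V x) \<le> norm x"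
proof -
  have "(norm x)\<^sup>2 = (norm (proj V x + (x - proj V x)))\<^sup>2" by simp
  also have "\<dots> = (norm (proj V x))\<^sup>2 + (norm (x - proj V x))\<^sup>2"
    by (simp only: norm_add_square proj_orthogonal[OF proj_in]) simp
  finally have "(norm (proj V x))\<^sup>2 \<le> (norm x)\<^sup>2" by simp
  then show ?thesis by (rule power2_le_imp_le) simp
qed

lemma bounded_clinear_proj: "bounded_clinear (proj V)"
  by (rule bounded_clinearI[where K=1]) (simp_all add: proj_add proj_scaleC norm_proj_le)

end

section \<open>Riesz representation and adjoints\<close>

lemma adjoint_eqI:
  assumes "\<And>x y. cinner (T x) y = cinner x (S y)"
  shows "adjoint T = S"
  unfolding adjoint_def
proof (rule the_equality)
  show "\<forall>x y. cinner (T x) y = cinner x (S y)" using assms by blast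
  fix S' assume "\<forall>x y. cinner (T x) y = cinner x (S' y)"
  then show "S' = S" using assms by (metis cinner_ext ext)
qed

lemma riesz_representation:
  fixes f :: "'a::chilbert \<Rightarrow> complex"
  assumes add: "\<And>x y. f (x + y) = f x + f y" and scale: "\<And>a x. f (a *\<^sub>C x) = a * f x"
    and bound: "\<And>x. cmod (f x) \<le> norm x * K"
  shows "\<exists>z. \<forall>x. f x = cinner z x"
proof (cases "\<forall>x. f x = 0")
  case True then show ?thesis by (intro exI[of _ 0]) simp
next
  case False
  then obtain u where u: "f u \<noteq> 0" by blast
  define V where "V = {x. f x = 0}"
  have f0: "f 0 = 0" using scale[of 0 0] by simp
  have "bounded_linear f"
  proof (rule bounded_linear_intro[where K=K])
    show "f (r *\<^sub>R x) = r *\<^sub>R f x" for r x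
      using scale[of "complex_of_real r" x] by (simp add: scaleR_scaleC scaleR_conv_of_real)
  qed (simp_all add: add bound)
  then have "closed V"
    unfolding V_def by (intro closed_Collect_eq linear_continuous_on continuous_on_const)
  moreover have "csubspace V" unfolding csubspace_def V_def using add scale f0 by simp
  ultimately interpret closed_csubspace V by unfold_locales
  define w where "w = u - proj V u"
  have "f (proj V u) = 0" using proj_in[of u] by (simp add: V_def)
  then have fw: "f w = f u"
    using add[of w "proj V u"] by (simp add: w_def)
  have w0: "w \<noteq> 0" using fw u by (auto simp: f0)
  have "f x = cinner ((cnj (f w) / complex_of_real ((norm w)\<^sup>2)) *\<^sub>C w) x" for x
  proof -
    have "f (f x *\<^sub>C w + (- f w) *\<^sub>C x) = 0"
      by (simp add: add scale)
    then have "cinner w (f x *\<^sub>C w + (- f w) *\<^sub>C x) = 0"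
      unfolding w_def by (intro proj_orthogonal') (simp add: V_def)
    then have "f x * complex_of_real ((norm w)\<^sup>2) = f w * cinner w x"
      by (simp add: cinner_add_right cinner_scaleC_right cinner_self)
    then show ?thesis
      using w0 by (simp add: cinner_scaleC_left field_simps)
  qed
  then show ?thesis by blast
qed

lemma bounded_clinear_has_adjoint:
  fixes T :: "'a::chilbert \<Rightarrow> 'a"
  assumes T: "bounded_clinear T"
  shows "\<exists>S. \<forall>x y. cinner (T x) y = cinner x (S y)"
proof -
  obtain K where K: "K > 0" "\<And>x. norm (T x) \<le> norm x * K"
    using bounded_clinear_pos_bound[OF T] by blast
  have "\<exists>z. \<forall>x. cinner y (T x) = cinner z x" for y
  proof (rule riesz_representation[where K="norm y * K"])
    show "cmod (cinner y (T x)) \<le> norm x * (norm y * K)" for x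
    proof -
      have "cmod (cinner y (T x)) \<le> norm y * norm (T x)" by (rule Cauchy_Schwarz_cinner)
      also have "\<dots> \<le> norm y * (norm x * K)" using K by (intro mult_left_mono) auto
      finally show ?thesis by (simp add: algebra_simps)
    qed
  qed (simp_all add: bounded_clinear_map_add[OF T] bounded_clinear_map_scaleC[OF T]
      cinner_add_right cinner_scaleC_right)
  then obtain S where "\<And>y x. cinner y (T x) = cinner (S y) x" by metis
  then have "cinner (T x) y = cinner x (S y)" for x y
    by (metis cinner_commute)
  then show ?thesis by blast
qed

lemma adjoint_cinner:
  assumes "bounded_clinear T"
  shows "cinner (T x) y = cinner x (adjoint T y)"
proof -
  obtain S where S: "\<forall>x y. cinner (T x) y = cinner x (S y)"
    using bounded_clinear_has_adjoint[OF assms] by blast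
  then have "adjoint T = S" by (intro adjoint_eqI) blast
  then show ?thesis using S by simp
qed

definition selfadj :: "('a::chilbert \<Rightarrow> 'a) \<Rightarrow> bool" where
  "selfadj T \<longleftrightarrow> (\<forall>x y. cinner (T x) y = cinner x (T y))"

lemma selfadjD: "selfadj T \<Longrightarrow> cinner (T x) y = cinner x (T y)"
  unfolding selfadj_def by blast

section \<open>The Banach algebra of bounded operators\<close>

text \<open>The library type \<open>'a \<Rightarrow>\<^sub>L 'a\<close> carries no multiplication; this copy of it is made a
  Banach algebra under composition, so that operator power series can be summed in it.\<close>

typedef (overloaded) 'a bop = "UNIV :: ('a::real_normed_vector \<Rightarrow>\<^sub>L 'a) set" by simp

setup_lifting type_definition_bop

instantiation bop :: (real_normed_vector) "{real_normed_algebra, monoid_mult}"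
begin

lift_definition zero_bop :: "'a bop" is 0 .
lift_definition one_bop :: "'a bop" is id_blinfun .
lift_definition plus_bop :: "'a bop \<Rightarrow> 'a bop \<Rightarrow> 'a bop" is "(+)" .
lift_definition minus_bop :: "'a bop \<Rightarrow> 'a bop \<Rightarrow> 'a bop" is "(-)" .
lift_definition uminus_bop :: "'a bop \<Rightarrow> 'a bop" is uminus .
lift_definition times_bop :: "'a bop \<Rightarrow> 'a bop \<Rightarrow> 'a bop" is blinfun_compose .
lift_definition scaleR_bop :: "real \<Rightarrow> 'a bop \<Rightarrow> 'a bop" is scaleR .
lift_definition norm_bop :: "'a bop \<Rightarrow> real" is norm .
definition sgn_bop :: "'a bop \<Rightarrow> 'a bop" where "sgn_bop x = inverse (norm x) *\<^sub>R x"
definition dist_bop :: "'a bop \<Rightarrow> 'a bop \<Rightarrow> real" where "dist_bop x y = norm (x - y)"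
definition uniformity_bop :: "('a bop \<times> 'a bop) filter" where
  "uniformity_bop = (INF e\<in>{0 <..}. principal {(x, y). dist x y < e})"
definition open_bop :: "'a bop set \<Rightarrow> bool" where
  "open_bop U = (\<forall>x\<in>U. \<forall>\<^sub>F (x', y) in uniformity. x' = x \<longrightarrow> y \<in> U)"

instance
proof
  fix a b c :: "'a bop" and r s :: real
  show "a + b + c = a + (b + c)" by transfer (simp add: algebra_simps)
  show "a + b = b + a" by transfer (simp add: algebra_simps)
  show "0 + a = a" by transfer simp
  show "- a + a = 0" by transfer simp
  show "a - b = a + - b" by transfer simp
  show "r *\<^sub>R (a + b) = r *\<^sub>R a + r *\<^sub>R b" by transfer (simp add: scaleR_add_right)
  show "(r + s) *\<^sub>R a = r *\<^sub>R a + s *\<^sub>R a" by transfer (simp add: scaleR_add_left)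
  show "r *\<^sub>R s *\<^sub>R a = (r * s) *\<^sub>R a" by transfer simp
  show "1 *\<^sub>R a = a" by transfer simp
  show "a * b * c = a * (b * c)" by transfer (rule blinfun_eqI, simp)
  show "(a + b) * c = a * c + b * c" by transfer (rule blinfun_eqI, simp add: blinfun.bilinear_simps)
  show "a * (b + c) = a * b + a * c" by transfer (rule blinfun_eqI, simp add: blinfun.bilinear_simps)
  show "r *\<^sub>R a * b = r *\<^sub>R (a * b)" by transfer (rule blinfun_eqI, simp add: blinfun.bilinear_simps)
  show "a * r *\<^sub>R b = r *\<^sub>R (a * b)" by transfer (rule blinfun_eqI, simp add: blinfun.bilinear_simps)
  show "1 * a = a" by transfer (rule blinfun_eqI, simp)
  show "a * 1 = a" by transfer (rule blinfun_eqI, simp)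
  show "norm (a * b) \<le> norm a * norm b" by transfer (rule norm_blinfun_compose)
  show "norm (a + b) \<le> norm a + norm b" by transfer (rule norm_triangle_ineq)
  show "norm (r *\<^sub>R a) = \<bar>r\<bar> * norm a" by transfer simp
  show "(norm a = 0) = (a = 0)" by transfer simp
  show "dist a b = norm (a - b)" by (simp add: dist_bop_def)
  show "sgn a = inverse (norm a) *\<^sub>R a" by (simp add: sgn_bop_def)
  show "(uniformity :: ('a bop \<times> 'a bop) filter) = (INF e\<in>{0 <..}. principal {(x, y). dist x y < e})"
    by (simp add: uniformity_bop_def)
  fix U :: "'a bop set"
  show "open U = (\<forall>x\<in>U. \<forall>\<^sub>F (x', y) in uniformity. x' = x \<longrightarrow> y \<in> U)"
    by (simp add: open_bop_def)
qed

end

lemma dist_bop_Rep: "dist (a::'a::real_normed_vector bop) b = dist (Rep_bop a) (Rep_bop b)"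
  by (simp add: dist_norm norm_bop.rep_eq minus_bop.rep_eq)

instance bop :: (banach) banach
proof
  fix X :: "nat \<Rightarrow> 'a bop"
  assume "Cauchy X"
  then have "Cauchy (\<lambda>n. Rep_bop (X n))" unfolding Cauchy_def by (simp add: dist_bop_Rep)
  then obtain L where L: "(\<lambda>n. Rep_bop (X n)) \<longlonglongrightarrow> L" using Cauchy_convergent_iff convergent_def by blast
  have "X \<longlonglongrightarrow> Abs_bop L"
    using L unfolding LIMSEQ_def by (simp add: dist_bop_Rep Abs_bop_inverse)
  then show "convergent X" by (auto simp: convergent_def)
qed

definition bop_apply :: "'a::real_normed_vector bop \<Rightarrow> 'a \<Rightarrow> 'a" where
  "bop_apply A x = blinfun_apply (Rep_bop A) x"

lemma bop_apply_mult [simp]: "bop_apply (A * B) x = bop_apply A (bop_apply B x)"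
  by (simp add: bop_apply_def times_bop.rep_eq)

lemma bop_apply_one [simp]: "bop_apply 1 x = x"
  by (simp add: bop_apply_def one_bop.rep_eq)

lemma bop_apply_diff [simp]: "bop_apply (A - B) x = bop_apply A x - bop_apply B x"
  by (simp add: bop_apply_def minus_bop.rep_eq blinfun.bilinear_simps)

lemma bop_apply_scaleR [simp]: "bop_apply (r *\<^sub>R A) x = r *\<^sub>R bop_apply A x"
  by (simp add: bop_apply_def scaleR_bop.rep_eq blinfun.bilinear_simps)

lemma norm_bop_apply_le: "norm (bop_apply A x) \<le> norm A * norm x"
  by (simp add: bop_apply_def norm_bop.rep_eq norm_blinfun)

lemma bop_apply_add_right: "bop_apply A (x + y) = bop_apply A x + bop_apply A y"
  by (simp add: bop_apply_def blinfun.bilinear_simps)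

lemma bop_apply_scaleR_right: "bop_apply A (r *\<^sub>R x) = r *\<^sub>R bop_apply A x"
  by (simp add: bop_apply_def blinfun.bilinear_simps)

lemma bounded_linear_bop_apply_left: "bounded_linear (\<lambda>A. bop_apply A x)"
  by (rule bounded_linear_intro[where K="norm x"])
    (simp_all add: norm_bop_apply_le, simp_all add: bop_apply_def plus_bop.rep_eq blinfun.bilinear_simps)

definition bop_of :: "('a::real_normed_vector \<Rightarrow> 'a) \<Rightarrow> 'a bop" where
  "bop_of T = Abs_bop (Blinfun T)"

lemma bop_apply_bop_of: "bounded_linear T \<Longrightarrow> bop_apply (bop_of T) = T"
  by (rule ext) (simp add: bop_apply_def bop_of_def Abs_bop_inverse bounded_linear_Blinfun_apply)

lemma norm_bop_of_le:
  "bounded_linear T \<Longrightarrow> 0 \<le> b \<Longrightarrow> (\<And>x. norm (T x) \<le> b * norm x) \<Longrightarrow> norm (bop_of T) \<le> b"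
  unfolding norm_bop.rep_eq bop_of_def
  by (simp add: Abs_bop_inverse) (rule norm_blinfun_bound, simp_all add: bounded_linear_Blinfun_apply)

lemma norm_power_bop_le: "norm (A::'a::real_normed_vector bop) \<le> 1 \<Longrightarrow> norm (A ^ n) \<le> 1"
proof (induction n)
  case 0 then show ?case by (simp add: norm_bop.rep_eq one_bop.rep_eq norm_blinfun_id_le)
next
  case (Suc n)
  have "norm (A ^ Suc n) \<le> norm A * norm (A ^ n)" by (simp add: norm_mult_ineq)
  also have "\<dots> \<le> 1 * 1" using Suc by (intro mult_mono) auto
  finally show ?case by simp
qed

section \<open>Coefficients of the square-root series\<close>

text \<open>The Taylor coefficients of \<open>g(t) = 1 - sqrt(1 - t)\<close>, computed from \<open>g\<^sup>2 = 2 g - t\<close>.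
  They are nonnegative and sum to \<open>g(1) = 1\<close>.\<close>

fun sqrt_coeff :: "nat \<Rightarrow> real" where
  "sqrt_coeff n =
    (if n = 0 then 0 else if n = 1 then 1/2
     else (1/2) * (\<Sum>i\<in>{1..<n}. sqrt_coeff i * sqrt_coeff (n - i)))"

declare sqrt_coeff.simps [simp del]

lemma sqrt_coeff_0 [simp]: "sqrt_coeff 0 = 0"
  and sqrt_coeff_1 [simp]: "sqrt_coeff (Suc 0) = 1/2"
  by (simp_all add: sqrt_coeff.simps)

lemma sqrt_coeff_ge2:
  "n \<ge> 2 \<Longrightarrow> sqrt_coeff n = (1/2) * (\<Sum>i\<in>{1..<n}. sqrt_coeff i * sqrt_coeff (n - i))"
  by (subst sqrt_coeff.simps) simp

lemma sqrt_coeff_nonneg: "sqrt_coeff n \<ge> 0"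
proof (induction n rule: less_induct)
  case (less n)
  consider "n = 0" | "n = 1" | "n \<ge> 2" by linarith
  then show ?case
  proof cases
    case 3
    have "(\<Sum>i\<in>{1..<n}. sqrt_coeff i * sqrt_coeff (n - i)) \<ge> 0"
      by (intro sum_nonneg mult_nonneg_nonneg less.IH) auto
    then show ?thesis by (simp add: sqrt_coeff_ge2[OF 3])
  qed simp_all
qed

lemma sqrt_coeff_convolution:
  "(\<Sum>i\<le>k. sqrt_coeff i * sqrt_coeff (k - i)) = 2 * sqrt_coeff k - (if k = 1 then 1 else 0)"
proof -
  consider "k = 0" | "k = 1" | "k \<ge> 2" by linarith
  then show ?thesis
  proof cases
    case 3
    have "{..k} = insert 0 (insert k {1..<k})" using 3 by auto
    then have "(\<Sum>i\<le>k. sqrt_coeff i * sqrt_coeff (k - i)) =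
        (\<Sum>i\<in>{1..<k}. sqrt_coeff i * sqrt_coeff (k - i))"
      using 3 by simp
    then show ?thesis using sqrt_coeff_ge2[OF 3] 3 by simp
  qed simp_all
qed

text \<open>The square of the \<open>m\<close>-th partial sum dominates the convolution sums up to \<open>n = m + 1\<close>,
  which by the previous lemma equal twice the \<open>n\<close>-th partial sum minus one.\<close>

lemma sqrt_coeff_partial_sum_le: "(\<Sum>i<n. sqrt_coeff i) \<le> 1"
proof (induction n rule: less_induct)
  case (less n)
  show ?case
  proof (cases "n \<le> 1")
    case True
    then have "n = 0 \<or> n = 1" by auto
    then show ?thesis by auto
  next
    case False
    define m where "m = n - 1"
    define s where "s = (\<Sum>i<m. sqrt_coeff i)"
    have IH: "s \<le> 1" "0 \<le> s"
      using less.IH[of m] False by (auto simp: s_def m_def sum_nonneg sqrt_coeff_nonneg)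
    have fin: "finite {(i,j). i + j < (n::nat)}"
      by (rule finite_subset[of _ "{..<n} \<times> {..<n}"]) auto
    have "(\<Sum>k<n. \<Sum>i\<le>k. sqrt_coeff i * sqrt_coeff (k - i)) =
        (\<Sum>(i,j)\<in>{(i,j). i + j < n}. sqrt_coeff i * sqrt_coeff j)"
      by (rule sum.triangle_reindex[symmetric])
    also have "\<dots> = (\<Sum>(i,j)\<in>{(i,j). i + j < n \<and> i \<ge> 1 \<and> j \<ge> 1}. sqrt_coeff i * sqrt_coeff j)"
      by (rule sum.mono_neutral_right[OF fin]) (auto simp: Suc_le_eq intro: Nat.gr0I)
    also have "\<dots> \<le> (\<Sum>(i,j)\<in>{..<m} \<times> {..<m}. sqrt_coeff i * sqrt_coeff j)"
      by (rule sum_mono2) (auto simp: m_def sqrt_coeff_nonneg)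
    also have "\<dots> = s * s"
      by (simp add: s_def sum_product sum.cartesian_product)
    also have "\<dots> \<le> 1" using IH by (simp add: mult_le_one)
    finally have "(\<Sum>k<n. \<Sum>i\<le>k. sqrt_coeff i * sqrt_coeff (k - i)) \<le> 1" .
    moreover have "(\<Sum>k<n. (if k = (1::nat) then 1 else 0::real)) = 1"
      using False by (simp add: sum.delta)
    ultimately show ?thesis
      by (simp add: sqrt_coeff_convolution sum_subtractf sum_distrib_left[symmetric])
  qed
qed

lemma summable_sqrt_coeff: "summable sqrt_coeff"
  by (rule summableI_nonneg_bounded[where x=1])
    (simp_all add: sqrt_coeff_nonneg sqrt_coeff_partial_sum_le)

lemma suminf_sqrt_coeff_le: "suminf sqrt_coeff \<le> 1"
  by (rule suminf_le_const[OF summable_sqrt_coeff]) (simp add: sqrt_coeff_partial_sum_le)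

section \<open>The modulus of a self-adjoint operator\<close>

text \<open>For self-adjoint \<open>c\<close> with \<open>\<parallel>c\<parallel> \<le> K\<close>, the radicand \<open>T = 1 - c\<^sup>2/K\<^sup>2\<close> satisfies
  \<open>\<parallel>T\<parallel> \<le> 1\<close>, so \<open>G = g(T)\<close> converges in norm and \<open>\<bar>c\<bar> = K (1 - G) = K sqrt(1 - T)\<close>.\<close>

locale bounded_selfadj =
  fixes c :: "'h::chilbert \<Rightarrow> 'h" and K :: real
  assumes bounded_clinear: "bounded_clinear c" and selfadj: "selfadj c" and K_pos: "K > 0"
    and norm_le: "\<And>x. norm (c x) \<le> K * norm x"
begin

definition radicand :: "'h \<Rightarrow> 'h" where
  "radicand x = x - inverse (K\<^sup>2) *\<^sub>R c (c x)"

lemma bounded_clinear_radicand: "bounded_clinear radicand"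
  using bounded_clinear_diff[OF bounded_clinear_id
      bounded_clinear_scaleC[OF bounded_clinear_compose[OF bounded_clinear bounded_clinear]]]
  by (simp add: radicand_def[abs_def] scaleR_scaleC)

lemma norm_radicand_le: "norm (radicand x) \<le> norm x"
proof -
  define k where "k = inverse (K\<^sup>2)"
  have k: "k > 0" "k * K\<^sup>2 = 1" using K_pos by (simp_all add: k_def)
  have cc: "cinner x (c (c x)) = complex_of_real ((norm (c x))\<^sup>2)"
    using selfadjD[OF selfadj, of x "c x"] by (simp add: cinner_self)
  have "(norm (c (c x)))\<^sup>2 \<le> K\<^sup>2 * (norm (c x))\<^sup>2"
    by (metis norm_le norm_ge_zero power_mono power_mult_distrib)
  then have "k\<^sup>2 * (norm (c (c x)))\<^sup>2 \<le> k\<^sup>2 * (K\<^sup>2 * (norm (c x))\<^sup>2)"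
    by (intro mult_left_mono) auto
  also have "\<dots> = (k * K\<^sup>2) * k * (norm (c x))\<^sup>2" by (simp add: power2_eq_square algebra_simps)
  finally have "k\<^sup>2 * (norm (c (c x)))\<^sup>2 \<le> k * (norm (c x))\<^sup>2" using k by simp
  then have "(norm (radicand x))\<^sup>2 \<le> (norm x)\<^sup>2 - k * (norm (c x))\<^sup>2"
    using k unfolding radicand_def k_def[symmetric]
    by (simp add: norm_diff_square cinner_scaleR_right cc power_mult_distrib)
  also have "\<dots> \<le> (norm x)\<^sup>2" using k by simp
  finally show ?thesis by (rule power2_le_imp_le) simp
qed

lemma selfadj_radicand: "selfadj radicand"
  unfolding selfadj_def
proof (intro allI)
  fix x y
  have "cinner (c (c x)) y = cinner x (c (c y))"
    using selfadjD[OF selfadj, of "c x" y] selfadjD[OF selfadj, of x "c y"] by simp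
  then show "cinner (radicand x) y = cinner x (radicand y)"
    by (simp add: radicand_def cinner_diff_left cinner_diff_right cinner_scaleR_left cinner_scaleR_right)
qed

lemma radicand_commute:
  assumes B: "bounded_clinear B" and Bc: "\<And>x. B (c x) = c (B x)"
  shows "B (radicand x) = radicand (B x)"
  by (simp add: radicand_def bounded_clinear_map_diff[OF B] bounded_clinear_map_scaleR[OF B] Bc)

definition radicand_bop :: "'h bop" where
  "radicand_bop = bop_of radicand"

lemma bop_apply_radicand_bop: "bop_apply radicand_bop = radicand"
  by (simp add: radicand_bop_def bop_apply_bop_of
      bounded_clinear_imp_bounded_linear[OF bounded_clinear_radicand])

lemma norm_radicand_bop_le: "norm radicand_bop \<le> 1"
  unfolding radicand_bop_def
  by (rule norm_bop_of_le[OF bounded_clinear_imp_bounded_linear[OF bounded_clinear_radicand]])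
    (simp_all add: norm_radicand_le)

definition root_term :: "nat \<Rightarrow> 'h bop" where
  "root_term n = sqrt_coeff n *\<^sub>R radicand_bop ^ n"

lemma norm_root_term_le: "norm (root_term n) \<le> sqrt_coeff n"
  using mult_left_mono[OF norm_power_bop_le[OF norm_radicand_bop_le, of n] sqrt_coeff_nonneg[of n]]
  by (simp add: root_term_def sqrt_coeff_nonneg)

lemma summable_norm_root_term: "summable (\<lambda>n. norm (root_term n))"
  by (rule summable_comparison_test[OF _ summable_sqrt_coeff]) (simp add: norm_root_term_le)

lemma summable_root_term: "summable root_term"
  by (rule summable_norm_cancel[OF summable_norm_root_term])

definition root_sum :: "'h bop" where
  "root_sum = suminf root_term"

lemma norm_root_sum_le: "norm root_sum \<le> 1"
proof -
  have "norm root_sum \<le> (\<Sum>n. norm (root_term n))"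
    unfolding root_sum_def by (rule summable_norm[OF summable_norm_root_term])
  also have "\<dots> \<le> suminf sqrt_coeff"
    by (rule suminf_le[OF norm_root_term_le summable_norm_root_term summable_sqrt_coeff])
  also have "\<dots> \<le> 1" by (rule suminf_sqrt_coeff_le)
  finally show ?thesis .
qed

lemma root_sum_square: "root_sum * root_sum = 2 *\<^sub>R root_sum - radicand_bop"
proof -
  have "root_sum * root_sum = (\<Sum>k. \<Sum>i\<le>k. root_term i * root_term (k - i))"
    unfolding root_sum_def by (rule Cauchy_product[OF summable_norm_root_term summable_norm_root_term])
  also have "(\<lambda>k. \<Sum>i\<le>k. root_term i * root_term (k - i)) =
      (\<lambda>k. 2 *\<^sub>R root_term k - (if k = 1 then radicand_bop else 0))"
  proof
    fix k
    have "(\<Sum>i\<le>k. root_term i * root_term (k - i)) =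
        (\<Sum>i\<le>k. (sqrt_coeff i * sqrt_coeff (k - i)) *\<^sub>R radicand_bop ^ k)"
      by (intro sum.cong) (simp_all add: root_term_def flip: power_add)
    also have "\<dots> = 2 *\<^sub>R root_term k - (if k = 1 then radicand_bop else 0)"
      by (simp add: scaleR_sum_left[symmetric] sqrt_coeff_convolution root_term_def scaleR_diff_left)
    finally show "(\<Sum>i\<le>k. root_term i * root_term (k - i)) =
        2 *\<^sub>R root_term k - (if k = 1 then radicand_bop else 0)" .
  qed
  also have "(\<Sum>k. 2 *\<^sub>R root_term k - (if k = 1 then radicand_bop else 0)) =
      (\<Sum>k. 2 *\<^sub>R root_term k) - (\<Sum>k. (if k = 1 then radicand_bop else 0))"
    using sums_single[of 1 "\<lambda>_. radicand_bop"]
    by (intro suminf_diff[symmetric] summable_scaleR_right summable_root_term) (simp add: sums_iff)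
  also have "\<dots> = 2 *\<^sub>R root_sum - radicand_bop"
    using sums_single[of 1 "\<lambda>_. radicand_bop"]
    by (simp add: root_sum_def suminf_scaleR_right[OF summable_root_term] sums_iff)
  finally show ?thesis .
qed

lemma bop_apply_root_sum: "bop_apply root_sum x = (\<Sum>n. bop_apply (root_term n) x)"
  and summable_bop_apply_root_term: "summable (\<lambda>n. bop_apply (root_term n) x)"
  unfolding root_sum_def
  by (rule bounded_linear.suminf[OF bounded_linear_bop_apply_left summable_root_term],
      rule bounded_linear.summable[OF bounded_linear_bop_apply_left summable_root_term])

lemma bop_apply_radicand_power_commute:
  assumes "\<And>x. B (radicand x) = radicand (B x)"
  shows "bop_apply (radicand_bop ^ n) (B x) = B (bop_apply (radicand_bop ^ n) x)"
  by (induction n arbitrary: x) (simp_all add: bop_apply_radicand_bop assms)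

lemma root_sum_commute:
  assumes B: "bounded_linear B" and BT: "\<And>x. B (radicand x) = radicand (B x)"
  shows "bop_apply root_sum (B x) = B (bop_apply root_sum x)"
proof -
  have "bop_apply root_sum (B x) = (\<Sum>n. B (bop_apply (root_term n) x))"
    by (simp add: bop_apply_root_sum root_term_def bop_apply_radicand_power_commute[where B=B, OF BT]
        linear_cmul[OF bounded_linear.linear[OF B]])
  also have "\<dots> = B (bop_apply root_sum x)"
    by (simp add: bop_apply_root_sum bounded_linear.suminf[OF B summable_bop_apply_root_term])
  finally show ?thesis .
qed

lemma radicand_power_cinner_sym:
  "cinner (bop_apply (radicand_bop ^ n) x) y = cinner x (bop_apply (radicand_bop ^ n) y)"
proof (induction n arbitrary: x y)
  case (Suc n)
  have "cinner (bop_apply (radicand_bop ^ Suc n) x) y = cinner (bop_apply (radicand_bop ^ n) x) (radicand y)"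
    by (simp add: bop_apply_radicand_bop selfadjD[OF selfadj_radicand])
  also have "\<dots> = cinner x (bop_apply (radicand_bop ^ Suc n) y)"
    by (simp add: Suc.IH bop_apply_radicand_bop bop_apply_radicand_power_commute)
  finally show ?case .
qed simp

lemma root_sum_cinner_sym: "cinner (bop_apply root_sum x) y = cinner x (bop_apply root_sum y)"
proof -
  have "cinner (bop_apply root_sum x) y = (\<Sum>n. cinner (bop_apply (root_term n) x) y)"
    unfolding bop_apply_root_sum
    by (rule bounded_linear.suminf[OF bounded_linear_cinner_left summable_bop_apply_root_term])
  also have "\<dots> = (\<Sum>n. cinner x (bop_apply (root_term n) y))"
    by (simp add: root_term_def cinner_scaleR_left cinner_scaleR_right radicand_power_cinner_sym)
  also have "\<dots> = cinner x (bop_apply root_sum y)"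
    unfolding bop_apply_root_sum
    by (rule bounded_linear.suminf[OF bounded_linear_cinner_right summable_bop_apply_root_term, symmetric])
  finally show ?thesis .
qed

lemma bounded_clinear_root_sum: "bounded_clinear (bop_apply root_sum)"
proof (rule bounded_clinearI[where K=1])
  show "bop_apply root_sum (a *\<^sub>C x) = a *\<^sub>C bop_apply root_sum x" for a x
    using root_sum_commute[OF bounded_linear_scaleC]
      bounded_clinear_map_scaleC[OF bounded_clinear_radicand] by simp
  show "norm (bop_apply root_sum x) \<le> norm x * 1" for x
    using norm_bop_apply_le[of root_sum x] norm_root_sum_le
    by (simp add: mult_right_le_one_le order_trans mult.commute)
qed (rule bop_apply_add_right)

definition abs_op :: "'h \<Rightarrow> 'h" where
  "abs_op x = K *\<^sub>R (x - bop_apply root_sum x)"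

lemma bounded_clinear_abs_op: "bounded_clinear abs_op"
  using bounded_clinear_scaleC[OF bounded_clinear_diff[OF bounded_clinear_id bounded_clinear_root_sum],
      of "complex_of_real K"]
  by (simp add: abs_op_def[abs_def] scaleR_scaleC)

lemma abs_op_square: "abs_op (abs_op x) = c (c x)"
proof -
  have sqrt: "bop_apply ((1 - root_sum) * (1 - root_sum)) x = x - radicand x"
    by (simp add: algebra_simps root_sum_square scaleR_2 bop_apply_radicand_bop)
  have abs: "abs_op y = K *\<^sub>R bop_apply (1 - root_sum) y" for y
    by (simp add: abs_op_def)
  have "abs_op (abs_op x) = (K * K) *\<^sub>R bop_apply ((1 - root_sum) * (1 - root_sum)) x"
    unfolding abs by (simp add: bop_apply_scaleR_right del: bop_apply_diff)
  also have "\<dots> = (K * K * inverse (K\<^sup>2)) *\<^sub>R c (c x)"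
    by (simp only: sqrt) (simp add: radicand_def)
  finally show ?thesis using K_pos by (simp add: power2_eq_square field_simps)
qed

lemma abs_op_commute:
  assumes B: "bounded_clinear B" and Bc: "\<And>x. B (c x) = c (B x)"
  shows "B (abs_op x) = abs_op (B x)"
  using root_sum_commute[OF bounded_clinear_imp_bounded_linear[OF B] radicand_commute[OF B Bc]]
  by (simp add: abs_op_def bounded_clinear_map_scaleR[OF B] bounded_clinear_map_diff[OF B])

lemma selfadj_abs_op: "selfadj abs_op"
  unfolding selfadj_def
  by (simp add: abs_op_def cinner_scaleR_left cinner_scaleR_right cinner_diff_left cinner_diff_right
      root_sum_cinner_sym)

lemma abs_op_nonneg: "Re (cinner (abs_op x) x) \<ge> 0"
proof -
  have "Re (cinner (bop_apply root_sum x) x) \<le> norm (bop_apply root_sum x) * norm x"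
    using complex_Re_le_cmod Cauchy_Schwarz_cinner order_trans by blast
  also have "\<dots> \<le> (norm root_sum * norm x) * norm x"
    by (intro mult_right_mono norm_bop_apply_le) simp
  also have "\<dots> \<le> (1 * norm x) * norm x"
    by (intro mult_right_mono norm_root_sum_le) simp_all
  finally show ?thesis using K_pos
    by (simp add: abs_op_def cinner_scaleR_left cinner_diff_left cinner_self_Re power2_eq_square)
qed

end

lemma selfadj_abs_exists:
  assumes c: "bounded_clinear c" and "selfadj c"
  obtains A where "bounded_clinear A" "selfadj A" "\<And>x. A (A x) = c (c x)"
    "\<And>x. Re (cinner (A x) x) \<ge> 0"
    "\<And>B x. bounded_clinear B \<Longrightarrow> (\<And>x. B (c x) = c (B x)) \<Longrightarrow> B (A x) = A (B x)"
proof -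
  obtain K where "K > 0" "\<And>x. norm (c x) \<le> norm x * K"
    using bounded_clinear_pos_bound[OF c] by blast
  then interpret bounded_selfadj c K
    using assms by unfold_locales (simp_all add: mult.commute)
  show ?thesis
    by (rule that[OF bounded_clinear_abs_op selfadj_abs_op abs_op_square abs_op_nonneg abs_op_commute])
qed

section \<open>Inverting coercive operators\<close>

lemma csubspace_range:
  assumes D: "bounded_clinear D"
  shows "csubspace (range D)"
  unfolding csubspace_def
proof (intro conjI ballI allI)
  show "0 \<in> range D" using rangeI[of D 0] by (simp add: bounded_clinear_map_zero[OF D])
  fix a u v assume "u \<in> range D" "v \<in> range D"
  then obtain x y where "u = D x" "v = D y" by blast
  then show "u + v \<in> range D" "a *\<^sub>C u \<in> range D"
    using rangeI[of D "x + y"] rangeI[of D "a *\<^sub>C x"]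
    by (simp_all add: bounded_clinear_map_add[OF D] bounded_clinear_map_scaleC[OF D])
qed

lemma closed_range_if_bounded_below:
  fixes D :: "'a::{complex_normed_vector_c, banach} \<Rightarrow> 'b::complex_normed_vector_c"
  assumes D: "bounded_clinear D" and below: "\<And>x. norm x \<le> norm (D x)"
  shows "closed (range D)"
  unfolding closed_sequential_limits
proof (intro allI impI)
  fix f l assume "(\<forall>n. f n \<in> range D) \<and> f \<longlonglongrightarrow> l"
  then have range: "\<forall>n. f n \<in> range D" and lim: "f \<longlonglongrightarrow> l" by auto
  define g where "g n = inv D (f n)" for n
  have g: "f = (\<lambda>n. D (g n))"
    using range by (simp add: g_def f_inv_into_f)
  have "Cauchy f" using lim by (rule LIMSEQ_imp_Cauchy)
  have "Cauchy g"
  proof (rule metric_CauchyI)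
    fix e :: real assume "e > 0"
    then obtain M where M: "\<forall>m\<ge>M. \<forall>n\<ge>M. dist (f m) (f n) < e"
      using \<open>Cauchy f\<close> metric_CauchyD by blast
    have "dist (g m) (g n) \<le> dist (f m) (f n)" for m n
      using below[of "g m - g n"] by (simp add: dist_norm g bounded_clinear_map_diff[OF D])
    then show "\<exists>M. \<forall>m\<ge>M. \<forall>n\<ge>M. dist (g m) (g n) < e" using M by (blast intro: le_less_trans)
  qed
  then obtain x where "g \<longlonglongrightarrow> x" using Cauchy_convergent_iff convergent_def by blast
  then have "f \<longlonglongrightarrow> D x"
    unfolding g by (rule bounded_linear.tendsto[OF bounded_clinear_imp_bounded_linear[OF D]])
  then have "l = D x" using lim by (rule LIMSEQ_unique[symmetric])
  then show "l \<in> range D" by simp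
qed

lemma coercive_bij_bounded_below:
  fixes D :: "'h::chilbert \<Rightarrow> 'h"
  assumes D: "bounded_clinear D" and coercive: "\<And>x. (norm x)\<^sup>2 \<le> Re (cinner (D x) x)"
  shows "bij D" and "norm x \<le> norm (D x)"
proof -
  have below: "norm x \<le> norm (D x)" for x
  proof -
    have "(norm x)\<^sup>2 \<le> Re (cinner (D x) x)" by (rule coercive)
    also have "\<dots> \<le> cmod (cinner (D x) x)" by (rule complex_Re_le_cmod)
    also have "\<dots> \<le> norm (D x) * norm x" by (rule Cauchy_Schwarz_cinner)
    finally have "norm x * norm x \<le> norm (D x) * norm x" by (simp add: power2_eq_square)
    then show ?thesis by (cases "x = 0") simp_all
  qed
  then show "norm x \<le> norm (D x)" .
  have "inj D"
  proof (rule injI)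
    fix x y assume "D x = D y"
    then show "x = y" using below[of "x - y"] by (simp add: bounded_clinear_map_diff[OF D])
  qed
  moreover have "surj D"
  proof -
    interpret W: closed_csubspace "range D"
      by unfold_locales (rule csubspace_range[OF D], rule closed_range_if_bounded_below[OF D below])
    have "y \<in> range D" for y
    proof -
      define z where "z = y - proj (range D) y"
      have "cinner (D z) z = 0"
        unfolding z_def by (rule W.proj_orthogonal) simp
      then have "(norm z)\<^sup>2 \<le> 0" using coercive[of z] by simp
      then have "y = proj (range D) y" by (simp add: z_def)
      then show ?thesis using W.proj_in[of y] by simp
    qed
    then show ?thesis by auto
  qed
  ultimately show "bij D" by (rule bijI)
qed

lemma bounded_clinear_inv:
  assumes D: "bounded_clinear D" "bij D" and below: "\<And>x. norm x \<le> norm (D x)"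
  shows "bounded_clinear (inv D)"
proof (rule bounded_clinearI[where K=1])
  have DE: "D (inv D y) = y" for y using D(2) by (simp add: bij_is_surj surj_f_inv_f)
  have ED: "inv D (D x) = x" for x using D(2) by (simp add: bij_is_inj)
  show "inv D (x + y) = inv D x + inv D y" for x y
    using ED[of "inv D x + inv D y"] by (simp add: bounded_clinear_map_add[OF D(1)] DE)
  show "inv D (a *\<^sub>C x) = a *\<^sub>C inv D x" for a x
    using ED[of "a *\<^sub>C inv D x"] by (simp add: bounded_clinear_map_scaleC[OF D(1)] DE)
  show "norm (inv D y) \<le> norm y * 1" for y
    using below[of "inv D y"] by (simp add: DE)
qed

lemma inv_commute:
  assumes "bij D" and "\<And>x. B (D x) = D (B x)"
  shows "B (inv D x) = inv D (B x)"
proof -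
  have "D (B (inv D x)) = B x"
    using assms by (simp add: bij_is_surj surj_f_inv_f flip: assms(2))
  then show ?thesis
    using assms(1) by (metis bij_inv_eq_iff)
qed

section \<open>The support projection of a self-adjoint operator\<close>

definition ker_perp :: "('h::chilbert \<Rightarrow> 'h) \<Rightarrow> 'h set" where
  "ker_perp X = {v. \<forall>w. X w = 0 \<longrightarrow> cinner w v = 0}"

lemma closed_csubspace_ker_perp: "closed_csubspace (ker_perp X)"
proof
  show "csubspace (ker_perp X)"
    unfolding csubspace_def ker_perp_def by (simp add: cinner_add_right cinner_scaleC_right)
  have "ker_perp X = (\<Inter>w\<in>{w. X w = 0}. {v. cinner w v = 0})"
    by (auto simp: ker_perp_def)
  then show "closed (ker_perp X)"
    by (simp add: closed_INT closed_Collect_eq linear_continuous_on[OF bounded_linear_cinner_right])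
qed

locale selfadj_support =
  fixes X :: "'h::chilbert \<Rightarrow> 'h"
  assumes bounded_clinear: "bounded_clinear X" and selfadj: "selfadj X"
begin

sublocale closed_csubspace "ker_perp X"
  by (rule closed_csubspace_ker_perp)

abbreviation support :: "'h \<Rightarrow> 'h" where
  "support \<equiv> proj (ker_perp X)"

lemma range_subset_ker_perp: "X z \<in> ker_perp X"
  unfolding ker_perp_def
proof (intro CollectI allI impI)
  fix w assume "X w = 0"
  then show "cinner w (X z) = 0" using selfadjD[OF selfadj, of w z] by simp
qed

lemma support_range: "support (X z) = X z"
  by (rule proj_fixes[OF range_subset_ker_perp])

lemma support_kernel: "X u = 0 \<Longrightarrow> support u = 0"
  by (rule proj_eq_0) (simp add: ker_perp_def cinner_commute[of _ u])

lemma kernel_diff_support: "X (u - support u) = 0"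
proof -
  define d where "d = u - support u"
  have "cinner (X (X d)) d = 0"
    unfolding d_def by (rule proj_orthogonal[OF range_subset_ker_perp])
  then have "cinner (X d) (X d) = 0" by (simp only: selfadjD[OF selfadj])
  then show ?thesis by (simp add: d_def)
qed

lemma support_commute:
  assumes B: "bounded_clinear B" and BX: "\<And>x. B (X x) = X (B x)"
  shows "support (B u) = B (support u)"
proof -
  have adj: "cinner (B x) y = cinner x (adjoint B y)" for x y
    by (rule adjoint_cinner[OF B])
  have BaX: "adjoint B (X y) = X (adjoint B y)" for y
  proof (rule cinner_ext)
    fix z
    have "cinner z (adjoint B (X y)) = cinner (X (B z)) y"
      by (simp flip: adj add: selfadjD[OF selfadj])
    also have "\<dots> = cinner z (X (adjoint B y))"
      by (simp flip: BX add: adj selfadjD[OF selfadj])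
    finally show "cinner z (adjoint B (X y)) = cinner z (X (adjoint B y))" .
  qed
  have "adjoint B 0 = 0"
    by (rule cinner_ext) (simp flip: adj)
  then have BV: "B v \<in> ker_perp X" if v: "v \<in> ker_perp X" for v
    unfolding ker_perp_def
  proof (intro CollectI allI impI)
    fix w assume "X w = 0"
    then have "cinner (adjoint B w) v = 0"
      using v BaX[of w] \<open>adjoint B 0 = 0\<close> by (simp add: ker_perp_def)
    then show "cinner w (B v) = 0"
      using adj[of v w] cinner_commute[of w "B v"] cinner_commute[of v "adjoint B w"] by simp
  qed
  have "support (B u) = support (B (support u)) + support (B (u - support u))"
    by (simp flip: proj_add bounded_clinear_map_add[OF B])
  also have "support (B (support u)) = B (support u)"
    by (rule proj_fixes[OF BV[OF proj_in]])
  also have "support (B (u - support u)) = 0"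
    by (rule support_kernel) (simp flip: BX add: kernel_diff_support bounded_clinear_map_zero[OF B])
  finally show ?thesis by simp
qed

end

section \<open>Lifting projections from quotients of von Neumann algebras\<close>

lemma eq_of_mult_double:
  fixes p q :: "'a::real_algebra_1"
  assumes "q * (p + p) = p + p" and "q * (1 - (p + p - 1)) = 0"
  shows "q = p"
proof -
  have "q * p + q * p = p + p" "q * (1 - p) + q * (1 - p) = 0 + 0"
    using assms by (simp_all add: distrib_left algebra_simps mult_2_right)
  then have "q * p = p" "q * (1 - p) = 0"
    by (simp_all flip: scaleR_2)
  then show ?thesis by (simp add: algebra_simps)
qed

locale vna_hom =
  fixes S :: "('h::chilbert \<Rightarrow> 'h) set" and \<pi> :: "('h \<Rightarrow> 'h) \<Rightarrow> 'm::cstar_alg"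
  assumes vna: "von_neumann_algebra S" and hom: "unital_star_hom_on_ops S \<pi>"
begin

lemma bounded_clinear_mem: "A \<in> S \<Longrightarrow> bounded_clinear A"
  and id_mem: "(\<lambda>v. v) \<in> S"
  and add_mem: "A \<in> S \<Longrightarrow> B \<in> S \<Longrightarrow> (\<lambda>v. A v + B v) \<in> S"
  and scaleC_mem: "A \<in> S \<Longrightarrow> (\<lambda>v. a *\<^sub>C A v) \<in> S"
  and compose_mem: "A \<in> S \<Longrightarrow> B \<in> S \<Longrightarrow> (\<lambda>v. A (B v)) \<in> S"
  and adjoint_mem: "A \<in> S \<Longrightarrow> adjoint A \<in> S"
  using vna by (auto simp: von_neumann_algebra_def id_def comp_def)

lemma diff_mem: "A \<in> S \<Longrightarrow> B \<in> S \<Longrightarrow> (\<lambda>v. A v - B v) \<in> S"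
  using add_mem[OF _ scaleC_mem, of A B "-1"] by (simp add: scaleC_minus1_left)

lemma bicommutant_mem:
  assumes T: "bounded_clinear T" and C: "C \<in> S"
    and commute: "\<And>B x. bounded_clinear B \<Longrightarrow> (\<And>x. B (C x) = C (B x)) \<Longrightarrow> B (T x) = T (B x)"
  shows "T \<in> S"
proof -
  have "B (T x) = T (B x)" if "B \<in> commutant S" for B x
    using that C by (intro commute) (auto simp: commutant_def fun_eq_iff)
  then have "T \<in> commutant (commutant S)"
    using T by (auto simp: commutant_def[of "commutant S"] fun_eq_iff)
  then show ?thesis using vna by (simp add: von_neumann_algebra_def)
qed

lemma pi_add: "A \<in> S \<Longrightarrow> B \<in> S \<Longrightarrow> \<pi> (\<lambda>v. A v + B v) = \<pi> A + \<pi> B"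
  and pi_scaleC: "A \<in> S \<Longrightarrow> \<pi> (\<lambda>v. a *\<^sub>C A v) = a *\<^sub>C \<pi> A"
  and pi_compose: "A \<in> S \<Longrightarrow> B \<in> S \<Longrightarrow> \<pi> (\<lambda>v. A (B v)) = \<pi> A * \<pi> B"
  and pi_adjoint: "A \<in> S \<Longrightarrow> \<pi> (adjoint A) = cstar (\<pi> A)"
  and pi_id: "\<pi> (\<lambda>v. v) = 1"
  using hom by (auto simp: unital_star_hom_on_ops_def comp_def id_def)

lemma pi_diff: "A \<in> S \<Longrightarrow> B \<in> S \<Longrightarrow> \<pi> (\<lambda>v. A v - B v) = \<pi> A - \<pi> B"
  using pi_add[OF _ scaleC_mem, of A B "-1"] pi_scaleC[of B "-1"] by (simp add: scaleC_minus1_left)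

text \<open>If \<open>\<pi>(c)\<^sup>2 = 1\<close> then \<open>\<pi>(\<bar>c\<bar>) = 1\<close>, because \<open>\<bar>c\<bar> - 1 = (c\<^sup>2 - 1)(1 + \<bar>c\<bar>)\<inverse>\<close>.\<close>

lemma abs_lift:
  assumes cS: "c \<in> S" and "selfadj c" and pc: "\<pi> c * \<pi> c = 1"
  obtains A where "A \<in> S" "selfadj A" "\<And>x. A (A x) = c (c x)" "\<And>x. A (c x) = c (A x)" "\<pi> A = 1"
proof -
  obtain A where A: "bounded_clinear A" "selfadj A" "\<And>x. A (A x) = c (c x)"
    "\<And>x. Re (cinner (A x) x) \<ge> 0"
    and A_commute: "\<And>B x. bounded_clinear B \<Longrightarrow> (\<And>x. B (c x) = c (B x)) \<Longrightarrow> B (A x) = A (B x)"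
    using selfadj_abs_exists[OF bounded_clinear_mem[OF cS] \<open>selfadj c\<close>] by blast
  have AS: "A \<in> S" by (rule bicommutant_mem[OF A(1) cS A_commute])
  define D where "D = (\<lambda>v. v + A v)"
  have DS: "D \<in> S" unfolding D_def by (rule add_mem[OF id_mem AS])
  have coercive: "(norm x)\<^sup>2 \<le> Re (cinner (D x) x)" for x
    using A(4)[of x] by (simp add: D_def cinner_add_left cinner_self_Re)
  note D_bij = coercive_bij_bounded_below[OF bounded_clinear_mem[OF DS] coercive]
  have ES: "inv D \<in> S"
    by (rule bicommutant_mem[OF bounded_clinear_inv[OF bounded_clinear_mem[OF DS] D_bij] DS])
      (rule inv_commute[OF D_bij(1)])
  have eq: "(\<lambda>v. A v - v) = (\<lambda>v. (\<lambda>v. c (c v) - v) (inv D v))"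
  proof
    fix v
    define x where "x = inv D v"
    have v: "v = x + A x"
      using surj_f_inv_f[OF bij_is_surj[OF D_bij(1)], of v] by (simp add: D_def x_def)
    show "A v - v = (\<lambda>v. c (c v) - v) (inv D v)"
      unfolding x_def[symmetric] by (simp add: v bounded_clinear_map_add[OF A(1)] A(3))
  qed
  have ccS: "(\<lambda>v. c (c v) - v) \<in> S" by (rule diff_mem[OF compose_mem[OF cS cS] id_mem])
  have "\<pi> A - 1 = \<pi> (\<lambda>v. A v - v)" by (simp add: pi_diff[OF AS id_mem] pi_id)
  also have "\<dots> = \<pi> (\<lambda>v. c (c v) - v) * \<pi> (inv D)"
    unfolding eq by (rule pi_compose[OF ccS ES])
  also have "\<pi> (\<lambda>v. c (c v) - v) = 0"
    using pc by (simp add: pi_diff[OF compose_mem[OF cS cS] id_mem] pi_compose[OF cS cS] pi_id)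
  finally have "\<pi> A = 1" by simp
  moreover have "A (c x) = c (A x)" for x
    using A_commute[OF bounded_clinear_mem[OF cS]] by simp
  ultimately show ?thesis using that[OF AS A(2,3)] by blast
qed

lemma symmetry_lift:
  assumes aS: "a \<in> S" and sa: "cstar (\<pi> a) = \<pi> a"
  obtains c where "c \<in> S" "selfadj c" "\<pi> c = \<pi> a + \<pi> a - 1"
proof
  define c where "c = (\<lambda>v. a v + adjoint a v - v)"
  have a_adj: "cinner (a x) y = cinner x (adjoint a y)" "cinner (adjoint a x) y = cinner x (a y)" for x y
    using adjoint_cinner[OF bounded_clinear_mem[OF aS]] cinner_commute by metis+
  show "c \<in> S"
    unfolding c_def by (rule diff_mem[OF add_mem[OF aS adjoint_mem[OF aS]] id_mem])
  show "selfadj c"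
    unfolding selfadj_def c_def
    by (simp add: cinner_diff_left cinner_diff_right cinner_add_left cinner_add_right a_adj)
  show "\<pi> c = \<pi> a + \<pi> a - 1"
    unfolding c_def
    by (simp add: pi_diff[OF add_mem[OF aS adjoint_mem[OF aS]] id_mem] pi_add[OF aS adjoint_mem[OF aS]]
        pi_adjoint[OF aS] pi_id sa)
qed

text \<open>With \<open>c\<close> a self-adjoint lift of the symmetry \<open>2p - 1\<close>, the support projection of
  \<open>\<bar>c\<bar> + c\<close> is the lift: \<open>\<pi>(\<bar>c\<bar> \<plusminus> c) = 1 \<plusminus> (2p - 1)\<close>, and \<open>(\<bar>c\<bar> + c)(\<bar>c\<bar> - c) = 0\<close>.\<close>

lemma projection_lift:
  assumes aS: "a \<in> S" and idem: "\<pi> a * \<pi> a = \<pi> a" and sa: "cstar (\<pi> a) = \<pi> a"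
  obtains P where "P \<in> S" "selfadj P" "\<And>v. P (P v) = P v" "\<pi> P = \<pi> a"
proof -
  define p where "p = \<pi> a"
  obtain c where cS: "c \<in> S" and c_sa: "selfadj c" and pc: "\<pi> c = p + p - 1"
    using symmetry_lift[OF aS sa] unfolding p_def by blast
  have "\<pi> c * \<pi> c - 1 = (p * p + p * p + p * p + p * p) - (p + p + p + p)"
    by (simp add: pc algebra_simps)
  then have "\<pi> c * \<pi> c = 1" using idem by (simp add: p_def)
  then obtain A where AS: "A \<in> S" and A: "selfadj A" "\<And>x. A (A x) = c (c x)" "\<And>x. A (c x) = c (A x)"
    and pA: "\<pi> A = 1"
    using abs_lift[OF cS c_sa] by blast
  define X where "X = (\<lambda>v. A v + c v)"
  define Y where "Y = (\<lambda>v. A v - c v)"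
  have XS: "X \<in> S" unfolding X_def by (rule add_mem[OF AS cS])
  have YS: "Y \<in> S" unfolding Y_def by (rule diff_mem[OF AS cS])
  have "selfadj X"
    unfolding selfadj_def X_def
    by (simp add: cinner_add_left cinner_add_right selfadjD[OF A(1)] selfadjD[OF c_sa])
  then interpret X: selfadj_support X
    using bounded_clinear_mem[OF XS] by unfold_locales
  have PS: "X.support \<in> S"
    using X.support_commute by (intro bicommutant_mem[OF X.bounded_clinear_proj XS]) simp
  have "(\<lambda>v. X.support (X v)) = X"
    by (simp add: X.support_range)
  then have "\<pi> X.support * (p + p) = p + p"
    using pi_compose[OF PS XS] by (simp add: X_def pi_add[OF AS cS] pA pc)
  moreover have "X (Y v) = 0" for v
    using bounded_clinear_mem[OF AS] bounded_clinear_mem[OF cS]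
    by (simp add: X_def Y_def bounded_clinear_map_diff A(2,3))
  then have "(\<lambda>v. X.support (Y v)) = (\<lambda>v. 0 *\<^sub>C v)"
    by (simp add: X.support_kernel)
  then have "\<pi> X.support * (1 - (p + p - 1)) = 0"
    using pi_compose[OF PS YS] pi_scaleC[OF id_mem, of 0] by (simp add: Y_def pi_diff[OF AS cS] pA pc)
  ultimately have "\<pi> X.support = p"
    by (rule eq_of_mult_double)
  then show ?thesis
    using that[OF PS] X.proj_cinner_sym X.proj_idem by (simp add: selfadj_def p_def)
qed

end

section \<open>Unital *-homomorphisms on \<open>\<complex> \<oplus> \<complex>\<close>\<close>

lemma unital_star_hom_cc:
  fixes \<phi> :: "cc \<Rightarrow> 'm::cstar_alg"
  assumes \<phi>: "unital_star_hom \<phi>"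
  shows "\<phi> z = cc1 z *\<^sub>C \<phi> (CC 1 0) + cc2 z *\<^sub>C (1 - \<phi> (CC 1 0))"
    and "\<phi> (CC 1 0) * \<phi> (CC 1 0) = \<phi> (CC 1 0)"
    and "cstar (\<phi> (CC 1 0)) = \<phi> (CC 1 0)"
proof -
  have hom: "\<phi> (x + y) = \<phi> x + \<phi> y" "\<phi> (a *\<^sub>C x) = a *\<^sub>C \<phi> x" "\<phi> (x * y) = \<phi> x * \<phi> y"
    "\<phi> (cstar x) = cstar (\<phi> x)" "\<phi> 1 = 1" for x y a
    using \<phi> by (simp_all add: unital_star_hom_def)
  have "\<phi> (1 - CC 1 0) = 1 - \<phi> (CC 1 0)"
    using hom(1)[of "1 - CC 1 0" "CC 1 0"] hom(5) by (simp add: eq_diff_eq)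
  moreover have "z = cc1 z *\<^sub>C CC 1 0 + cc2 z *\<^sub>C (1 - CC 1 0)"
    by (simp add: cc_eq_iff scaleC_cc_def)
  then have "\<phi> z = \<phi> (cc1 z *\<^sub>C CC 1 0 + cc2 z *\<^sub>C (1 - CC 1 0))" by simp
  ultimately show "\<phi> z = cc1 z *\<^sub>C \<phi> (CC 1 0) + cc2 z *\<^sub>C (1 - \<phi> (CC 1 0))"
    by (simp add: hom(1,2))
  have "CC 1 0 * CC 1 0 = CC 1 0" by (simp add: cc_eq_iff)
  then show "\<phi> (CC 1 0) * \<phi> (CC 1 0) = \<phi> (CC 1 0)"
    using hom(3)[of "CC 1 0" "CC 1 0"] by simp
  show "cstar (\<phi> (CC 1 0)) = \<phi> (CC 1 0)"
    using hom(4)[of "CC 1 0"] by (simp add: cstar_cc_def)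
qed

lemma unital_star_hom_to_ops_projection:
  assumes P: "bounded_clinear P" "selfadj P" and idem: "\<And>v. P (P v) = P v"
  shows "unital_star_hom_to_ops (\<lambda>z v. cc1 z *\<^sub>C P v + cc2 z *\<^sub>C (v - P v))"
  unfolding unital_star_hom_to_ops_def
proof (intro conjI allI)
  note P_lin = bounded_clinear_map_add[OF P(1)] bounded_clinear_map_scaleC[OF P(1)]
    bounded_clinear_map_diff[OF P(1)]
  fix x y :: cc
  show "(\<lambda>v. cc1 (x * y) *\<^sub>C P v + cc2 (x * y) *\<^sub>C (v - P v)) =
      (\<lambda>v. cc1 x *\<^sub>C P v + cc2 x *\<^sub>C (v - P v)) \<circ> (\<lambda>v. cc1 y *\<^sub>C P v + cc2 y *\<^sub>C (v - P v))"
    by (rule ext) (simp add: P_lin idem scaleC_diff_right scaleC_add_right scaleC_scaleC algebra_simps)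
  show "(\<lambda>v. cc1 (cstar x) *\<^sub>C P v + cc2 (cstar x) *\<^sub>C (v - P v)) =
      adjoint (\<lambda>v. cc1 x *\<^sub>C P v + cc2 x *\<^sub>C (v - P v))"
    by (rule sym, rule adjoint_eqI)
      (simp add: cstar_cc_def cinner_add_left cinner_add_right cinner_scaleC_left cinner_scaleC_right
        cinner_diff_left cinner_diff_right selfadjD[OF P(2)])
qed (simp_all add: scaleC_add_left scaleC_add_right scaleC_cc_def scaleC_scaleC scaleC_one
    algebra_simps fun_eq_iff)

theorem proposition4p1:
  fixes S :: "('h::chilbert \<Rightarrow> 'h) set"
    and \<pi> :: "('h \<Rightarrow> 'h) \<Rightarrow> 'm::cstar_alg"
    and \<phi> :: "cc \<Rightarrow> 'm"
  assumes "von_neumann_algebra S"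
    and "unital_star_hom_on_ops S \<pi>"
    and "\<pi> ` S = UNIV"
    and "unital_star_hom \<phi>"
  shows "\<exists>\<psi>. (\<forall>x. \<psi> x \<in> S) \<and> unital_star_hom_to_ops \<psi> \<and> (\<forall>x. \<pi> (\<psi> x) = \<phi> x)"
proof -
  interpret vna_hom S \<pi> using assms(1,2) by unfold_locales
  obtain a where "a \<in> S" "\<pi> a = \<phi> (CC 1 0)" using assms(3) by (metis UNIV_I imageE)
  then obtain P where PS: "P \<in> S" and P: "selfadj P" "\<And>v. P (P v) = P v" and pP: "\<pi> P = \<phi> (CC 1 0)"
    using projection_lift unital_star_hom_cc(2,3)[OF assms(4)] by metis
  define \<psi> where "\<psi> z = (\<lambda>v. cc1 z *\<^sub>C P v + cc2 z *\<^sub>C (v - P v))" for z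
  have \<psi>S: "\<psi> z \<in> S" for z
    unfolding \<psi>_def by (intro add_mem scaleC_mem diff_mem PS id_mem)
  have "\<pi> (\<psi> z) = \<phi> z" for z
    unfolding \<psi>_def unital_star_hom_cc(1)[OF assms(4), of z]
    by (simp add: pi_add[OF scaleC_mem scaleC_mem] pi_scaleC pi_diff pi_id PS diff_mem[OF id_mem PS]
        id_mem pP)
  moreover have "unital_star_hom_to_ops \<psi>"
    unfolding \<psi>_def[abs_def]
    by (rule unital_star_hom_to_ops_projection[OF bounded_clinear_mem[OF PS] P])
  ultimately show ?thesis using \<psi>S by blast
qed

end
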